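(* Assume the standard setting described in the context. Define the random processes $\mathbf g_1(\theta):=\nabla J_{\mathbf M}(\theta)$ and \[ \mathbf g_2(\theta):=\Bigl(\bigl(\partial^2_{\beta_j}\hat{\mathbf J}(\theta)\bigr)_{j\in V_1},\ \bigl(\partial_{\beta_j}\partial_{w_{ij}}\hat{\mathbf J}(\theta)\bigr)_{j\in V_1,i\in V_0},\ \bigl(\partial_{w_{ij}}\partial_{w_{kj}}\hat{\mathbf J}(\theta)\bigr)_{j\in V_1,\ i,k\in V_0,\ i\le k}\Bigr), \] where $\hat{\mathbf J}(\theta):=\int\Psi_\theta(x)f_{\mathbf M}(x)\,\mathbb{P}_X(dx)$ and $\le$ is a fixed total order on $V_0$. Then for every $\theta\in\mathcal{E}_P^{(0,0,1,2)}(\mathcal{X})$ the Gaussian random vector $(\mathbf g_1(\theta),\mathbf g_2(\theta))$ is non-degenerate, i.e. its covariance matrix has full rank.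
   Context: Shallow network: finite pairwise disjoint sets $V_0,V_1,V_2$, activation $\psi$; $E=(V_0\times V_1)\cup(V_1\times V_2)$; $\Theta=\mathbb{R}^E\times\mathbb{R}^{V_1\cup V_2}$, $\theta=(w,\beta)$; response $(\Psi_\theta(x))_l=\beta_l+\sum_{j\in V_1}\psi(\beta_j+\sum_{i\in V_0}x_iw_{ij})w_{jl}$; $w_{j\bullet}=(w_{jl})_{l\in V_2}$. Standard setting: $\#V_2=1$, $\psi$ real-analytic; $\mathbb{P}_X$ a distribution on $\mathbb{R}^{V_0}$ with compact support $\mathcal{X}$; measurable space $\mathbb{M}$, kernel $K$ from $\mathbb{M}\times\mathbb{R}^{V_0}$ to $\mathbb{R}^{V_2}$; for $\mathbf m\in\mathbb{M}$, under $\mathbb{P}_{\mathbf m}$: $X\sim\mathbb{P}_X$, $\mathbb{P}_{\mathbf m}(Y\in B\mid X)=K(\mathbf m,X;B)$, $\mathbb{E}_{\mathbf m}[\|Y\|^2]<\infty$; target $f_{\mathbf m}(x)=\int y\,K(\mathbf m,x;dy)$; $R:\Theta\to\mathbb{R}$ real-analytic convex; $\mathbf M$ an $\mathbb{M}$-valued random variable such that for every continuous $\phi$, $\int\phi f_{\mathbf M}\,d\mathbb{P}_X$ is Gaussian with strictly positive variance whenever $\phi\not\equiv0$ on $\mathcal{X}$. Cost $J_{\mathbf m}(\theta)=\mathbb{E}_{\mathbf m}[(\Psi_\theta(X)-Y)^2]+R(\theta)$. Polynomial efficiency: for $m=(m_\emptyset,m_0,\dots,m_n)\in\mathbb{N}_0^{n+2}$,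 $\theta$ is $m$-polynomially efficient on $\mathcal{X}$ if $w_{k\bullet}\not\equiv0$ for all $k\in V_1$, $\psi$ is $n$ times differentiable, and the only polynomials $P^{(\emptyset)}$ of degree $\le m_\emptyset$ and $P_j^{(k)}$ ($j\in V_1$, $0\le k\le n$) of degree $\le m_k$ with $P^{(\emptyset)}(x)+\sum_{j\in V_1}\sum_{k=0}^nP^{(k)}_j(x)\psi^{(k)}(\beta_j+\sum_{i}x_iw_{ij})=0$ for all $x\in\mathcal{X}$ are zero. $\mathcal{E}^m_P(\mathcal{X})$ is the set of these parameters. *)

theory Defs
  imports "HOL-Analysis.Analysis" "HOL-Probability.Probability"
begin

text \<open>V0 is represented by a finite (linearly ordered) type 'i, V1 by a finite type 'j,
  V2 is a singleton. A parameter theta = (w, beta) is represented as a tuple (W, v, b, c) with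
  W $ i $ j = w_ij (i in V0, j in V1), v $ j = w_jl (l the output neuron),
  b $ j = beta_j (j in V1), c = beta_l.\<close>

type_synonym ('i, 'j) param = "((real ^ 'j) ^ 'i) \<times> (real ^ 'j) \<times> (real ^ 'j) \<times> real"

definition pW :: "('i::finite, 'j::finite) param \<Rightarrow> (real ^ 'j) ^ 'i" where "pW \<theta> = fst \<theta>"
definition pv :: "('i::finite, 'j::finite) param \<Rightarrow> real ^ 'j" where "pv \<theta> = fst (snd \<theta>)"
definition pb :: "('i::finite, 'j::finite) param \<Rightarrow> real ^ 'j" where "pb \<theta> = fst (snd (snd \<theta>))"
definition pc :: "('i::finite, 'j::finite) param \<Rightarrow> real" where "pc \<theta> = snd (snd (snd \<theta>))"

definition preact :: "('i::finite, 'j::finite) param \<Rightarrow> real ^ 'i \<Rightarrow> 'j \<Rightarrow> real" where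
  "preact \<theta> x j = pb \<theta> $ j + (\<Sum>i\<in>UNIV. x $ i * pW \<theta> $ i $ j)"

definition resp :: "(real \<Rightarrow> real) \<Rightarrow> ('i::finite, 'j::finite) param \<Rightarrow> real ^ 'i \<Rightarrow> real" where
  "resp \<psi> \<theta> x = pc \<theta> + (\<Sum>j\<in>UNIV. \<psi> (preact \<theta> x j) * pv \<theta> $ j)"

definition multi_indices :: "('a::euclidean_space \<Rightarrow> nat) set" where
  "multi_indices = {\<alpha>. \<forall>b. b \<notin> Basis \<longrightarrow> \<alpha> b = 0}"

text \<open>f is real-analytic on S: near every point of S it is the sum of an (unconditionally,
  i.e. absolutely) convergent power series in the coordinates.\<close>
definition real_analytic_on :: "('a::euclidean_space \<Rightarrow> real) \<Rightarrow> 'a set \<Rightarrow> bool" where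
  "real_analytic_on f S \<longleftrightarrow>
     (\<forall>x0\<in>S. \<exists>r>0. \<exists>c :: ('a \<Rightarrow> nat) \<Rightarrow> real. \<forall>x\<in>ball x0 r.
        ((\<lambda>\<alpha>. c \<alpha> * (\<Prod>b\<in>Basis. ((x - x0) \<bullet> b) ^ \<alpha> b)) has_sum f x) multi_indices)"

definition mono_idx :: "nat \<Rightarrow> ('i::finite \<Rightarrow> nat) set" where
  "mono_idx d = {\<alpha>. sum \<alpha> UNIV \<le> d}"

definition mpoly_eval :: "nat \<Rightarrow> (('i::finite \<Rightarrow> nat) \<Rightarrow> real) \<Rightarrow> real ^ 'i \<Rightarrow> real" where
  "mpoly_eval d a x = (\<Sum>\<alpha>\<in>mono_idx d. a \<alpha> * (\<Prod>i\<in>UNIV. (x $ i) ^ \<alpha> i))"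

text \<open>theta is m-polynomially efficient on X, where m = (m0, ms!0, ..., ms!n), n = length ms - 1.\<close>
definition poly_efficient ::
  "(real \<Rightarrow> real) \<Rightarrow> (real ^ 'i) set \<Rightarrow> nat \<Rightarrow> nat list \<Rightarrow> ('i::finite, 'j::finite) param \<Rightarrow> bool" where
  "poly_efficient \<psi> X m0 ms \<theta> \<longleftrightarrow>
     ms \<noteq> [] \<and>
     (\<forall>k. pv \<theta> $ k \<noteq> 0) \<and>
     (\<forall>k < length ms - 1. \<forall>t. (deriv ^^ k) \<psi> differentiable (at t)) \<and>
     (\<forall>(a0 :: ('i \<Rightarrow> nat) \<Rightarrow> real) (A :: 'j \<Rightarrow> nat \<Rightarrow> ('i \<Rightarrow> nat) \<Rightarrow> real).
        (\<forall>x\<in>X. mpoly_eval m0 a0 x +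
                (\<Sum>j\<in>UNIV. \<Sum>k<length ms. mpoly_eval (ms ! k) (A j k) x * (deriv ^^ k) \<psi> (preact \<theta> x j)) = 0)
        \<longrightarrow> (\<forall>\<alpha>\<in>mono_idx m0. a0 \<alpha> = 0) \<and>
            (\<forall>j k. k < length ms \<longrightarrow> (\<forall>\<alpha>\<in>mono_idx (ms ! k). A j k \<alpha> = 0)))"

definition msupport :: "'a::topological_space measure \<Rightarrow> 'a set" where
  "msupport \<mu> = {x. \<forall>U. open U \<longrightarrow> x \<in> U \<longrightarrow> emeasure \<mu> U > 0}"

definition target :: "('m \<times> (real ^ 'i::finite) \<Rightarrow> real measure) \<Rightarrow> 'm \<Rightarrow> real ^ 'i \<Rightarrow> real" where
  "target K m x = (\<integral>y. y \<partial>K (m, x))"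

definition Jcost :: "(real \<Rightarrow> real) \<Rightarrow> (real ^ 'i::finite) measure \<Rightarrow> ('m \<times> (real ^ 'i) \<Rightarrow> real measure)
     \<Rightarrow> (('i, 'j::finite) param \<Rightarrow> real) \<Rightarrow> 'm \<Rightarrow> ('i, 'j) param \<Rightarrow> real" where
  "Jcost \<psi> PX K R m \<theta> = (\<integral>x. (\<integral>y. (resp \<psi> \<theta> x - y)\<^sup>2 \<partial>K (m, x)) \<partial>PX) + R \<theta>"

definition Jhat :: "(real \<Rightarrow> real) \<Rightarrow> (real ^ 'i::finite) measure \<Rightarrow> ('m \<times> (real ^ 'i) \<Rightarrow> real measure)
     \<Rightarrow> 'm \<Rightarrow> ('i, 'j::finite) param \<Rightarrow> real" where
  "Jhat \<psi> PX K m \<theta> = (\<integral>x. resp \<psi> \<theta> x * target K m x \<partial>PX)"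

definition gradient :: "('a::real_inner \<Rightarrow> real) \<Rightarrow> 'a \<Rightarrow> 'a" where
  "gradient f x = (THE D. GDERIV f x :> D)"

definition pdiff :: "('a::real_normed_vector \<Rightarrow> real) \<Rightarrow> 'a \<Rightarrow> 'a \<Rightarrow> real" where
  "pdiff f e x = deriv (\<lambda>t. f (x + t *\<^sub>R e)) 0"

definition dir_b :: "'j \<Rightarrow> ('i::finite, 'j::finite) param" where
  "dir_b j = (0, 0, axis j 1, 0)"
definition dir_w :: "'i \<Rightarrow> 'j \<Rightarrow> ('i::finite, 'j::finite) param" where
  "dir_w i j = (axis i (axis j 1), 0, 0, 0)"

datatype ('p, 'i, 'j) gidx = G1 'p | Gbb 'j | Gbw 'j 'i | Gww 'j 'i 'i

definition gindex :: "(('i::{finite,linorder}, 'j::finite) param, 'i, 'j) gidx set" where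
  "gindex = G1 ` Basis \<union> range Gbb \<union> {Gbw j i | j i. True} \<union> {Gww j i k | j i k. i \<le> k}"

definition gvec :: "(real \<Rightarrow> real) \<Rightarrow> (real ^ 'i::{finite,linorder}) measure \<Rightarrow> ('m \<times> (real ^ 'i::{finite,linorder}) \<Rightarrow> real measure)
     \<Rightarrow> (('i::{finite,linorder}, 'j::finite) param \<Rightarrow> real) \<Rightarrow> 'm \<Rightarrow> ('i::{finite,linorder}, 'j::finite) param
     \<Rightarrow> (('i::{finite,linorder}, 'j::finite) param, 'i::{finite,linorder}, 'j::finite) gidx \<Rightarrow> real" where
  "gvec \<psi> PX K R m \<theta> idx =
     (case idx of
        G1 e \<Rightarrow> gradient (Jcost \<psi> PX K R m) \<theta> \<bullet> e
      | Gbb j \<Rightarrow> pdiff (pdiff (Jhat \<psi> PX K m) (dir_b j)) (dir_b j) \<theta>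
      | Gbw j i \<Rightarrow> pdiff (pdiff (Jhat \<psi> PX K m) (dir_w i j)) (dir_b j) \<theta>
      | Gww j i k \<Rightarrow> pdiff (pdiff (Jhat \<psi> PX K m) (dir_w k j)) (dir_w i j) \<theta>)"

definition cov_matrix :: "'w measure \<Rightarrow> ('w \<Rightarrow> 'k \<Rightarrow> real) \<Rightarrow> 'k \<Rightarrow> 'k \<Rightarrow> real" where
  "cov_matrix P Z a b =
     (\<integral>\<omega>. (Z \<omega> a - (\<integral>\<omega>'. Z \<omega>' a \<partial>P)) * (Z \<omega> b - (\<integral>\<omega>'. Z \<omega>' b \<partial>P)) \<partial>P)"

definition full_rank_on :: "'k set \<Rightarrow> ('k \<Rightarrow> 'k \<Rightarrow> real) \<Rightarrow> bool" where
  "full_rank_on I C \<longleftrightarrow> (\<forall>c. (\<forall>a\<in>I. (\<Sum>b\<in>I. C a b * c b) = 0) \<longrightarrow> (\<forall>b\<in>I. c b = 0))"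

end

theory Submission
  imports Defs
begin

text \<open>
  Every entry of \<open>(g1, g2)(\<theta>)\<close> is a deterministic constant plus the Gaussian functional
  \<open>\<phi> \<mapsto> \<integral>\<phi> f_M dP_X\<close> evaluated at an explicit continuous function \<open>\<phi>_a\<close>: differentiating the cost
  under the integral sign, the gradient entries give \<open>\<phi> = -2 \<partial>\<Psi>_\<theta>\<close>, and the second derivatives
  of \<open>Jhat\<close> in the directions of one hidden unit \<open>j\<close> give \<open>w_j \<psi>''(\<beta>_j + x w_{\<bullet>j})\<close> times a
  monomial of degree at most 2 in \<open>x\<close>. If \<open>c\<close> is a null vector of the covariance matrix, then
  \<open>\<integral>(\<Sum>a. c_a \<phi>_a) f_M dP_X\<close> has variance 0, so it is not a nondegenerate Gaussian and
  \<open>\<Sum>a. c_a \<phi>_a\<close> vanishes on the support of \<open>P_X\<close>. Written out, this is a relation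
  \<open>const + \<Sum>j. p_j \<psi> + q_j \<psi>' + r_j \<psi>'' = 0\<close> on the support with polynomials of degrees 0, 1, 2, and
  \<open>(0,0,1,2)\<close>-polynomial efficiency forces all coefficients, hence \<open>c\<close>, to vanish.
\<close>

section \<open>Real-analytic functions\<close>

definition unit_multi_index :: "'a \<Rightarrow> 'a \<Rightarrow> nat" where
  "unit_multi_index b = (\<lambda>b'. if b' = b then 1 else 0)"

definition multi_degree :: "('a::euclidean_space \<Rightarrow> nat) \<Rightarrow> nat" where
  "multi_degree \<alpha> = (\<Sum>b\<in>Basis. \<alpha> b)"

definition basis_monomial :: "'a::euclidean_space \<Rightarrow> ('a \<Rightarrow> nat) \<Rightarrow> real" where
  "basis_monomial h \<alpha> = (\<Prod>b\<in>Basis. (h \<bullet> b) ^ \<alpha> b)"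

lemma unit_multi_index_neq_zero: "unit_multi_index b \<noteq> (\<lambda>_. 0)"
  by (auto simp: unit_multi_index_def fun_eq_iff)

lemma multi_indices_degree_le_1:
  assumes "\<alpha> \<in> multi_indices" "multi_degree \<alpha> \<le> 1"
  shows "\<alpha> = (\<lambda>_. 0) \<or> (\<exists>b\<in>Basis. \<alpha> = unit_multi_index b)"
proof (cases "\<forall>b\<in>Basis. \<alpha> b = 0")
  case True
  then show ?thesis using assms(1) by (auto simp: multi_indices_def fun_eq_iff)
next
  case False
  then obtain b where b: "b \<in> Basis" "\<alpha> b \<noteq> 0" by auto
  have "\<alpha> b + (\<Sum>b'\<in>Basis-{b}. \<alpha> b') \<le> 1"
    using assms(2) b(1) by (simp add: multi_degree_def sum.remove)
  then have "\<alpha> b = 1" "sum \<alpha> (Basis-{b}) = 0" using b(2) by arith+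
  then have "\<alpha> b = 1" "\<forall>b'\<in>Basis-{b}. \<alpha> b' = 0" by simp_all
  then have "\<alpha> = unit_multi_index b"
    using assms(1) by (auto simp: multi_indices_def fun_eq_iff unit_multi_index_def)
  then show ?thesis using b by auto
qed

lemma basis_monomial_unit_multi_index:
  "b \<in> Basis \<Longrightarrow> basis_monomial h (unit_multi_index b) = h \<bullet> b"
  by (simp add: basis_monomial_def unit_multi_index_def if_distrib prod.delta cong: if_cong)

lemma abs_basis_monomial_le: "\<bar>basis_monomial h \<alpha>\<bar> \<le> norm h ^ multi_degree \<alpha>"
proof -
  have "\<bar>basis_monomial h \<alpha>\<bar> = (\<Prod>b\<in>Basis. \<bar>h \<bullet> b\<bar> ^ \<alpha> b)"
    by (simp add: basis_monomial_def abs_prod power_abs)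
  also have "\<dots> \<le> (\<Prod>b\<in>Basis. norm h ^ \<alpha> b)"
    by (intro prod_mono conjI power_mono) (auto simp: Basis_le_norm)
  finally show ?thesis by (simp add: multi_degree_def power_sum)
qed

lemma has_derivative_of_quadratic_remainder:
  fixes f :: "'a::real_normed_vector \<Rightarrow> 'b::real_normed_vector"
  assumes "bounded_linear L" "r > 0"
    and remainder: "\<And>h. norm h < r \<Longrightarrow> norm (f (x + h) - f x - L h) \<le> C * (norm h)\<^sup>2"
  shows "(f has_derivative L) (at x)"
  unfolding has_derivative_at_alt
proof (intro conjI allI impI assms(1))
  fix e :: real assume "e > 0"
  define d where "d = min r (e / (\<bar>C\<bar> + 1))"
  have "d > 0" using \<open>e > 0\<close> \<open>r > 0\<close> by (simp add: d_def)
  moreover have "norm (f y - f x - L (y - x)) \<le> e * norm (y - x)" if "norm (y - x) < d" for y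
  proof -
    have "norm (f y - f x - L (y - x)) \<le> C * (norm (y - x))\<^sup>2"
      using remainder[of "y - x"] that by (simp add: d_def)
    also have "\<dots> \<le> (\<bar>C\<bar> + 1) * norm (y - x) * norm (y - x)"
      by (simp add: power2_eq_square mult_right_mono mult.assoc)
    also have "\<dots> \<le> e * norm (y - x)"
      using that \<open>e > 0\<close> by (intro mult_right_mono) (auto simp: d_def field_simps)
    finally show ?thesis .
  qed
  ultimately show "\<exists>d>0. \<forall>y. norm (y - x) < d \<longrightarrow> norm (f y - f x - L (y - x)) \<le> e * norm (y - x)"
    by blast
qed

lemma sum_basis_monomial_degree_le_1:
  "(\<Sum>\<alpha>\<in>insert (\<lambda>_. 0) (unit_multi_index ` Basis). c \<alpha> * basis_monomial h \<alpha>)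
    = c (\<lambda>_. 0) + (\<Sum>b\<in>Basis. c (unit_multi_index b) * (h \<bullet> (b::'a::euclidean_space)))"
proof -
  have "(\<lambda>_. 0::nat) \<notin> unit_multi_index ` Basis"
    using unit_multi_index_neq_zero by (metis imageE)
  moreover have "inj_on unit_multi_index (Basis::'a set)"
    by (auto simp: unit_multi_index_def fun_eq_iff inj_on_def)
  ultimately have "(\<Sum>\<alpha>\<in>insert (\<lambda>_. 0) (unit_multi_index ` Basis). c \<alpha> * basis_monomial h \<alpha>)
      = c (\<lambda>_. 0) * basis_monomial h (\<lambda>_. 0)
        + (\<Sum>b\<in>Basis. c (unit_multi_index b) * basis_monomial h (unit_multi_index b))"
    by (subst sum.insert) (simp_all add: sum.reindex)
  then show ?thesis
    by (simp add: basis_monomial_unit_multi_index, simp add: basis_monomial_def)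
qed

text \<open>Only the monomials of degree at least 2 contribute to the remainder, and on the ball of
  radius \<open>s\<close> each of them is dominated by its value at the corner point of the cube of side
  \<open>s\<close> times \<open>(norm h / s)\<^sup>2\<close>.\<close>

lemma power_series_quadratic_remainder:
  fixes c :: "('a::euclidean_space \<Rightarrow> nat) \<Rightarrow> real"
  assumes sum: "((\<lambda>\<alpha>. c \<alpha> * basis_monomial h \<alpha>) has_sum y) multi_indices"
    and abs_summable: "(\<lambda>\<alpha>. \<bar>c \<alpha>\<bar> * s ^ multi_degree \<alpha>) summable_on multi_indices"
    and "0 < s" "norm h \<le> s"
  shows "\<bar>y - c (\<lambda>_. 0) - (\<Sum>b\<in>Basis. c (unit_multi_index b) * (h \<bullet> b))\<bar>
           \<le> (\<Sum>\<^sub>\<infinity>\<alpha>\<in>multi_indices. \<bar>c \<alpha>\<bar> * s ^ multi_degree \<alpha>) * (norm h / s)\<^sup>2"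
proof -
  define t where "t \<alpha> = c \<alpha> * basis_monomial h \<alpha>" for \<alpha>
  define F where "F = insert (\<lambda>_. 0) (unit_multi_index ` (Basis::'a set))"
  define g where "g \<alpha> = \<bar>c \<alpha>\<bar> * s ^ multi_degree \<alpha> * (norm h / s)\<^sup>2" for \<alpha>
  have F: "finite F" "F \<subseteq> multi_indices"
    by (auto simp: F_def multi_indices_def unit_multi_index_def)
  have "sum t F = c (\<lambda>_. 0) + (\<Sum>b\<in>Basis. c (unit_multi_index b) * (h \<bullet> b))"
    unfolding t_def F_def by (rule sum_basis_monomial_degree_le_1)
  then have remainder: "(t has_sum (y - c (\<lambda>_. 0) - (\<Sum>b\<in>Basis. c (unit_multi_index b) * (h \<bullet> b))))
      (multi_indices - F)"
    using has_sum_Diff[OF sum[folded t_def] has_sum_finite[OF F(1)] F(2)] by (simp add: algebra_simps)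
  have g_summable: "g summable_on (multi_indices - F)"
    unfolding g_def by (intro summable_on_cmult_left summable_on_subset[OF abs_summable]) auto
  have bound: "\<bar>t \<alpha>\<bar> \<le> g \<alpha>" if "\<alpha> \<in> multi_indices - F" for \<alpha>
  proof -
    have "multi_degree \<alpha> \<ge> 2"
      using that multi_indices_degree_le_1[of \<alpha>] by (force simp: F_def)
    then have "(norm h / s) ^ multi_degree \<alpha> \<le> (norm h / s)\<^sup>2"
      using assms(3,4) by (intro power_decreasing) auto
    then have "norm h ^ multi_degree \<alpha> \<le> s ^ multi_degree \<alpha> * (norm h / s)\<^sup>2"
      using assms(3) by (simp add: power_divide field_simps)
    then show ?thesis
      using abs_basis_monomial_le[of h \<alpha>] unfolding t_def g_def abs_mult
      by (metis (no_types, opaque_lifting) abs_ge_zero mult.assoc mult_left_mono order_trans)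
  qed
  have "y - c (\<lambda>_. 0) - (\<Sum>b\<in>Basis. c (unit_multi_index b) * (h \<bullet> b)) \<le> infsum g (multi_indices - F)"
    using bound by (intro has_sum_mono[OF remainder has_sum_infsum[OF g_summable]]) (simp add: abs_le_iff)
  moreover have "- (y - c (\<lambda>_. 0) - (\<Sum>b\<in>Basis. c (unit_multi_index b) * (h \<bullet> b))) \<le> infsum g (multi_indices - F)"
    using bound by (intro has_sum_mono[OF has_sum_uminusI[OF remainder] has_sum_infsum[OF g_summable]])
      (simp add: abs_le_iff)
  ultimately have "\<bar>y - c (\<lambda>_. 0) - (\<Sum>b\<in>Basis. c (unit_multi_index b) * (h \<bullet> b))\<bar> \<le> infsum g (multi_indices - F)"
    by linarith
  also have "\<dots> \<le> infsum g multi_indices"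
    using g_summable summable_on_cmult_left[OF abs_summable] \<open>s > 0\<close>
    by (intro infsum_mono_neutral) (auto simp: g_def[abs_def])
  also have "\<dots> = (\<Sum>\<^sub>\<infinity>\<alpha>\<in>multi_indices. \<bar>c \<alpha>\<bar> * s ^ multi_degree \<alpha>) * (norm h / s)\<^sup>2"
    unfolding g_def by (rule infsum_cmult_left')
  finally show ?thesis .
qed

lemma real_analytic_on_local_expansion:
  fixes R :: "'a::euclidean_space \<Rightarrow> real"
  assumes "real_analytic_on R S" "x0 \<in> S"
  obtains c s where "s > 0"
    "\<And>h. norm h \<le> s \<Longrightarrow> ((\<lambda>\<alpha>. c \<alpha> * basis_monomial h \<alpha>) has_sum R (x0 + h)) multi_indices"
    "(\<lambda>\<alpha>. \<bar>c \<alpha>\<bar> * s ^ multi_degree \<alpha>) summable_on multi_indices"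
proof -
  obtain r c where "r > 0" and expansion: "\<And>x. x \<in> ball x0 r \<Longrightarrow>
      ((\<lambda>\<alpha>. c \<alpha> * (\<Prod>b\<in>Basis. ((x - x0) \<bullet> b) ^ \<alpha> b)) has_sum R x) multi_indices"
    using assms unfolding real_analytic_on_def by blast
  define s where "s = r / (2 * DIM('a))"
  have "real DIM('a) \<ge> 1" using DIM_positive[where 'a='a] by linarith
  then have "s \<le> r / 2"
    unfolding s_def using \<open>r > 0\<close> by (intro divide_left_mono) auto
  then have "s > 0" "s < r" using \<open>r > 0\<close> by (auto simp: s_def)
  have has_sum: "((\<lambda>\<alpha>. c \<alpha> * basis_monomial h \<alpha>) has_sum R (x0 + h)) multi_indices"
    if "norm h < r" for h
    using expansion[of "x0 + h"] that by (simp add: basis_monomial_def dist_norm)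
  \<comment> \<open>absolute convergence is read off at the corner point with all coordinates equal to \<open>s\<close>\<close>
  define p :: 'a where "p = (\<Sum>b\<in>Basis. s *\<^sub>R b)"
  have "norm p \<le> DIM('a) * s"
    using norm_sum[of "\<lambda>b. s *\<^sub>R b" "Basis::'a set"] \<open>s > 0\<close> by (simp add: p_def)
  also have "\<dots> = r / 2" by (simp add: s_def)
  also have "\<dots> < r" using \<open>r > 0\<close> by simp
  finally have "((\<lambda>\<alpha>. c \<alpha> * s ^ multi_degree \<alpha>) has_sum R (x0 + p)) multi_indices"
    using has_sum[of p] by (simp add: basis_monomial_def multi_degree_def p_def inner_sum_left
        inner_Basis if_distrib power_sum cong: if_cong)
  then have "(\<lambda>\<alpha>. c \<alpha> * s ^ multi_degree \<alpha>) summable_on multi_indices"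
    by (auto simp: summable_on_def)
  then have "(\<lambda>\<alpha>. norm (c \<alpha> * s ^ multi_degree \<alpha>)) summable_on multi_indices"
    by (rule summable_on_iff_abs_summable_on_real[THEN iffD1])
  then have "(\<lambda>\<alpha>. \<bar>c \<alpha>\<bar> * s ^ multi_degree \<alpha>) summable_on multi_indices"
    using \<open>s > 0\<close> by (simp add: abs_mult)
  then show thesis using that[of s c] \<open>s > 0\<close> \<open>s < r\<close> has_sum by simp
qed

lemma real_analytic_on_differentiable:
  fixes R :: "'a::euclidean_space \<Rightarrow> real"
  assumes "real_analytic_on R S" "x0 \<in> S"
  shows "R differentiable (at x0)"
proof -
  obtain c s where "s > 0"
    and expansion: "\<And>h. norm h \<le> s \<Longrightarrow> ((\<lambda>\<alpha>. c \<alpha> * basis_monomial h \<alpha>) has_sum R (x0 + h)) multi_indices"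
    and abs_summable: "(\<lambda>\<alpha>. \<bar>c \<alpha>\<bar> * s ^ multi_degree \<alpha>) summable_on multi_indices"
    using real_analytic_on_local_expansion[OF assms] by blast
  define C where "C = (\<Sum>\<^sub>\<infinity>\<alpha>\<in>multi_indices. \<bar>c \<alpha>\<bar> * s ^ multi_degree \<alpha>) / s\<^sup>2"
  define L where "L h = (\<Sum>b\<in>Basis. c (unit_multi_index b) * (h \<bullet> b))" for h
  have remainder: "\<bar>R (x0 + h) - c (\<lambda>_. 0) - L h\<bar> \<le> C * (norm h)\<^sup>2" if "norm h \<le> s" for h
    using power_series_quadratic_remainder[OF expansion[OF that] abs_summable \<open>s > 0\<close> that] \<open>s > 0\<close>
    by (simp add: C_def L_def power_divide)
  have "R x0 = c (\<lambda>_. 0)"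
    using remainder[of 0] \<open>s > 0\<close> by (simp add: L_def)
  then have "(R has_derivative L) (at x0)"
    using remainder \<open>s > 0\<close> unfolding L_def
    by (intro has_derivative_of_quadratic_remainder[where r = s and C = C] bounded_linear_intros) auto
  then show ?thesis by (auto simp: differentiable_def)
qed

lemma real_analytic_on_real_power_series:
  fixes \<psi> :: "real \<Rightarrow> real"
  assumes "real_analytic_on \<psi> S" "x0 \<in> S"
  obtains r a where "r > 0" "\<And>z. \<bar>z\<bar> < r \<Longrightarrow> (\<lambda>n. a n * z ^ n) sums \<psi> (x0 + z)"
proof -
  obtain r c where "r > 0" and expansion: "\<And>x. x \<in> ball x0 r \<Longrightarrow>
      ((\<lambda>\<alpha>. c \<alpha> * (\<Prod>b\<in>Basis. ((x - x0) \<bullet> b) ^ \<alpha> b)) has_sum \<psi> x) multi_indices"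
    using assms unfolding real_analytic_on_def by blast
  define e where "e n = (\<lambda>b::real. if b = 1 then n else 0)" for n :: nat
  have "bij_betw e UNIV (multi_indices :: (real \<Rightarrow> nat) set)"
  proof (rule bij_betw_byWitness[where f' = "\<lambda>\<alpha>. \<alpha> 1"])
    show "\<forall>\<alpha>\<in>multi_indices. e (\<alpha> 1) = \<alpha>" by (auto simp: multi_indices_def e_def fun_eq_iff)
  qed (auto simp: e_def multi_indices_def)
  moreover have "((\<lambda>\<alpha>. c \<alpha> * z ^ \<alpha> 1) has_sum \<psi> (x0 + z)) multi_indices" if "\<bar>z\<bar> < r" for z
    using expansion[of "x0 + z"] that by (simp add: dist_norm)
  ultimately have "((\<lambda>n. c (e n) * z ^ n) has_sum \<psi> (x0 + z)) UNIV" if "\<bar>z\<bar> < r" for z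
    using has_sum_reindex_bij_betw[of e UNIV multi_indices "\<lambda>\<alpha>. c \<alpha> * z ^ \<alpha> 1"] that
    by (simp add: e_def)
  then show thesis using that[of r "\<lambda>n. c (e n)"] \<open>r > 0\<close> has_sum_imp_sums by blast
qed

lemma power_series_expansion_has_real_derivative:
  fixes a :: "nat \<Rightarrow> real" and f :: "real \<Rightarrow> real"
  assumes expansion: "\<And>z. \<bar>z\<bar> < r \<Longrightarrow> (\<lambda>n. a n * z ^ n) sums f (x0 + z)" and "\<bar>z\<bar> < r"
  shows "(f has_real_derivative (\<Sum>n. diffs a n * z ^ n)) (at (x0 + z))"
proof -
  define P where "P w = (\<Sum>n. a n * w ^ n)" for w :: real
  have "(P has_real_derivative (\<Sum>n. diffs a n * z ^ n)) (at z)"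
    unfolding P_def using expansion \<open>\<bar>z\<bar> < r\<close> by (intro termdiffs_strong'[of r]) (auto simp: sums_iff)
  then have "(P has_real_derivative (\<Sum>n. diffs a n * z ^ n)) (at ((x0 + z) - x0))"
    by simp
  then have "((\<lambda>x. P (x - x0)) has_real_derivative (\<Sum>n. diffs a n * z ^ n) * 1) (at (x0 + z))"
    by (rule DERIV_chain2) (auto intro!: derivative_eq_intros)
  then have "((\<lambda>x. P (x - x0)) has_real_derivative (\<Sum>n. diffs a n * z ^ n)) (at (x0 + z))"
    by simp
  then show ?thesis
  proof (rule has_field_derivative_transform_within_open[where S = "ball x0 r"])
    show "P (x - x0) = f x" if "x \<in> ball x0 r" for x
      using expansion[of "x - x0"] that by (simp add: P_def sums_iff dist_real_def abs_minus_commute)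
  qed (use \<open>\<bar>z\<bar> < r\<close> in \<open>auto simp: dist_real_def\<close>)
qed

lemma power_series_expansion_deriv:
  fixes a :: "nat \<Rightarrow> real" and f :: "real \<Rightarrow> real"
  assumes expansion: "\<And>z. \<bar>z\<bar> < r \<Longrightarrow> (\<lambda>n. a n * z ^ n) sums f (x0 + z)" and "\<bar>z\<bar> < r"
  shows "(\<lambda>n. diffs a n * z ^ n) sums deriv f (x0 + z)"
proof -
  have "summable (\<lambda>n. diffs a n * z ^ n)"
    using expansion \<open>\<bar>z\<bar> < r\<close> by (intro termdiff_converges[of z r]) (auto simp: sums_iff)
  then show ?thesis
    using DERIV_imp_deriv[OF power_series_expansion_has_real_derivative[OF expansion \<open>\<bar>z\<bar> < r\<close>]]
    by (simp add: summable_sums)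
qed

lemma real_analytic_on_has_higher_deriv:
  fixes \<psi> :: "real \<Rightarrow> real"
  assumes "real_analytic_on \<psi> S" "x \<in> S"
  shows "((deriv ^^ k) \<psi> has_real_derivative (deriv ^^ Suc k) \<psi> x) (at x)"
proof -
  obtain r a where "r > 0" and expansion: "\<And>z. \<bar>z\<bar> < r \<Longrightarrow> (\<lambda>n. a n * z ^ n) sums \<psi> (x + z)"
    using real_analytic_on_real_power_series[OF assms] by blast
  have derivs: "\<bar>z\<bar> < r \<Longrightarrow> (\<lambda>n. (diffs ^^ m) a n * z ^ n) sums (deriv ^^ m) \<psi> (x + z)" for m z
  proof (induction m arbitrary: z)
    case (Suc m)
    then show ?case using power_series_expansion_deriv[of r "(diffs ^^ m) a"] by simp
  qed (simp add: expansion)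
  have "((deriv ^^ k) \<psi> has_real_derivative (\<Sum>n. diffs ((diffs ^^ k) a) n * 0 ^ n)) (at (x + 0))"
    using derivs \<open>r > 0\<close> by (intro power_series_expansion_has_real_derivative) auto
  moreover have "(\<lambda>n. diffs ((diffs ^^ k) a) n * 0 ^ n) sums (deriv ^^ Suc k) \<psi> x"
    using derivs[of 0 "Suc k"] \<open>r > 0\<close> by simp
  ultimately show ?thesis by (simp add: sums_iff)
qed

section \<open>Differentiation under the integral sign\<close>

lemma integrable_continuous_mult_compact_support:
  fixes \<mu> :: "'x::euclidean_space measure" and \<phi> :: "'x \<Rightarrow> real"
  assumes "continuous_on UNIV \<phi>" "compact S" "AE x in \<mu>. x \<in> S" "integrable \<mu> w"
    "sets \<mu> = sets borel"
  shows "integrable \<mu> (\<lambda>x. \<phi> x * w x)"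
proof -
  have "compact (\<phi> ` S)"
    using assms(1,2) by (meson compact_continuous_image continuous_on_subset subset_UNIV)
  then obtain B where B: "\<And>x. x \<in> S \<Longrightarrow> \<bar>\<phi> x\<bar> \<le> B"
    using compact_imp_bounded[of "\<phi> ` S"] by (auto simp: bounded_iff)
  show ?thesis
  proof (rule Bochner_Integration.integrable_bound[where f = "\<lambda>x. B * w x"])
    show "integrable \<mu> (\<lambda>x. B * w x)" using assms(4) by simp
    have "\<phi> \<in> borel_measurable \<mu>"
      using borel_measurable_continuous_onI[OF assms(1)] measurable_cong_sets[OF assms(5) refl] by blast
    then show "(\<lambda>x. \<phi> x * w x) \<in> borel_measurable \<mu>" using assms(4) by measurable
    show "AE x in \<mu>. norm (\<phi> x * w x) \<le> norm (B * w x)"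
      using assms(3)
    proof eventually_elim
      case (elim x)
      then have "\<bar>\<phi> x\<bar> \<le> \<bar>B\<bar>" using B by (meson abs_ge_self order_trans)
      then show ?case by (auto simp: abs_mult intro!: mult_right_mono)
    qed
  qed
qed

lemma uniform_continuity_in_parameter:
  fixes F :: "'a::euclidean_space \<times> 'x::euclidean_space \<Rightarrow> real"
  assumes "continuous_on UNIV F" "compact S" "e > 0"
  obtains d where "d > 0" "\<And>x k. x \<in> S \<Longrightarrow> dist k \<theta> < d \<Longrightarrow> \<bar>F (k, x) - F (\<theta>, x)\<bar> < e"
proof -
  have "uniformly_continuous_on (cball \<theta> 1 \<times> S) F"
    using assms(1,2)
    by (intro compact_uniformly_continuous compact_Times compact_cball continuous_on_subset[OF assms(1)]) auto
  then obtain d where "d > 0" and d: "\<forall>p\<in>cball \<theta> 1 \<times> S. \<forall>q\<in>cball \<theta> 1 \<times> S.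
      dist q p < d \<longrightarrow> dist (F q) (F p) < e"
    using assms(3) unfolding uniformly_continuous_on_def by blast
  have "\<bar>F (k, x) - F (\<theta>, x)\<bar> < e" if "x \<in> S" "dist k \<theta> < min d 1" for x k
    using d[rule_format, of "(\<theta>, x)" "(k, x)"] that
    by (auto simp: dist_Pair_Pair dist_commute dist_real_def)
  then show thesis using that[of "min d 1"] \<open>d > 0\<close> by simp
qed

lemma linear_real_componentwise:
  fixes f :: "'a::euclidean_space \<Rightarrow> real"
  assumes "linear f"
  shows "f h = (\<Sum>b\<in>Basis. (h \<bullet> b) * f b)"
proof -
  have "f h = f (\<Sum>b\<in>Basis. (h \<bullet> b) *\<^sub>R b)" by (simp add: euclidean_representation)
  also have "\<dots> = (\<Sum>b\<in>Basis. (h \<bullet> b) * f b)"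
    using assms by (simp add: linear_sum linear_scale)
  finally show ?thesis .
qed

lemma has_derivative_remainder_bound:
  fixes f :: "'a::{real_normed_vector, perfect_space} \<Rightarrow> real"
  assumes deriv: "\<And>k. k \<in> ball \<theta> d \<Longrightarrow> (f has_derivative f' k) (at k)"
    and close: "\<And>k h. k \<in> ball \<theta> d \<Longrightarrow> \<bar>f' k h - f' \<theta> h\<bar> \<le> e * norm h"
    and "y \<in> ball \<theta> d"
  shows "\<bar>f y - f \<theta> - f' \<theta> (y - \<theta>)\<bar> \<le> e * norm (y - \<theta>)"
proof -
  have "d > 0"
    using zero_le_dist[of \<theta> y] \<open>y \<in> ball \<theta> d\<close> unfolding mem_ball by linarith
  then have "\<theta> \<in> ball \<theta> d" by simp
  then have "bounded_linear (f' \<theta>)" using has_derivative_bounded_linear deriv by metis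
  define u where "u k = f k - f' \<theta> k" for k
  have "(u has_derivative (\<lambda>h. f' k h - f' \<theta> h)) (at k within ball \<theta> d)" if "k \<in> ball \<theta> d" for k
    unfolding u_def
    by (rule has_derivative_at_withinI, intro has_derivative_diff deriv[OF that]
        bounded_linear_imp_has_derivative \<open>bounded_linear (f' \<theta>)\<close>)
  then have "norm (u y - u \<theta>) \<le> e * norm (y - \<theta>)"
  proof (rule differentiable_bound[OF convex_ball])
    show "onorm (\<lambda>h. f' k h - f' \<theta> h) \<le> e" if "k \<in> ball \<theta> d" for k
      using close[OF that] by (intro onorm_le) simp
  qed (use \<open>y \<in> ball \<theta> d\<close> \<open>\<theta> \<in> ball \<theta> d\<close> in auto)
  moreover have "f' \<theta> (y - \<theta>) = f' \<theta> y - f' \<theta> \<theta>"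
    by (rule linear_diff[OF bounded_linear.linear[OF \<open>bounded_linear (f' \<theta>)\<close>]])
  ultimately show ?thesis by (simp add: u_def)
qed

lemma continuous_derivative_uniform_bound:
  fixes G :: "'a::euclidean_space \<Rightarrow> 'x::euclidean_space \<Rightarrow> 'a \<Rightarrow> real"
  assumes G_cont: "\<And>h. continuous_on UNIV (\<lambda>p. G (fst p) (snd p) h)"
    and linear_G: "\<And>k x. linear (G k x)" and "compact S" "e > 0"
  obtains d where "d > 0" "\<And>x k h. x \<in> S \<Longrightarrow> k \<in> ball \<theta> d \<Longrightarrow> \<bar>G k x h - G \<theta> x h\<bar> \<le> e * norm h"
proof -
  define \<Phi> where "\<Phi> p = (\<Sum>b\<in>Basis. \<bar>G (fst p) (snd p) b - G \<theta> (snd p) b\<bar>)" for p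
  have "continuous_on UNIV (\<lambda>p::'a \<times> 'x. (\<theta>, snd p))" by (intro continuous_intros)
  have "continuous_on UNIV (\<lambda>p::'a \<times> 'x. G \<theta> (snd p) b)" for b
    using continuous_on_compose2[OF G_cont[of b] \<open>continuous_on UNIV (\<lambda>p. (\<theta>, snd p))\<close>] by simp
  then have "continuous_on UNIV \<Phi>" unfolding \<Phi>_def by (intro continuous_intros G_cont)
  then obtain d where "d > 0" and d: "\<And>x k. x \<in> S \<Longrightarrow> dist k \<theta> < d \<Longrightarrow> \<bar>\<Phi> (k, x) - \<Phi> (\<theta>, x)\<bar> < e"
    using uniform_continuity_in_parameter[OF _ \<open>compact S\<close> \<open>e > 0\<close>] by blast
  have "\<bar>G k x h - G \<theta> x h\<bar> \<le> e * norm h" if "x \<in> S" "k \<in> ball \<theta> d" for x k h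
  proof -
    have "G k x h - G \<theta> x h = (\<Sum>b\<in>Basis. (h \<bullet> b) * (G k x b - G \<theta> x b))"
      using linear_real_componentwise[OF linear_G, of k x h] linear_real_componentwise[OF linear_G, of \<theta> x h]
      by (simp add: sum_subtractf right_diff_distrib)
    then have "\<bar>G k x h - G \<theta> x h\<bar> \<le> (\<Sum>b\<in>Basis. \<bar>h \<bullet> b\<bar> * \<bar>G k x b - G \<theta> x b\<bar>)"
      by (metis (no_types, lifting) abs_mult sum.cong sum_abs)
    also have "\<dots> \<le> (\<Sum>b\<in>Basis. norm h * \<bar>G k x b - G \<theta> x b\<bar>)"
      by (intro sum_mono mult_right_mono) (auto simp: Basis_le_norm)
    also have "\<dots> = norm h * \<Phi> (k, x)" by (simp add: \<Phi>_def sum_distrib_left)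
    also have "\<dots> \<le> norm h * e"
      using d[of x k] that by (intro mult_left_mono) (auto simp: \<Phi>_def dist_commute)
    finally show ?thesis by (simp add: mult.commute)
  qed
  then show thesis using that \<open>d > 0\<close> by blast
qed

lemma abs_integral_mult_le:
  fixes f w :: "'x \<Rightarrow> real"
  assumes "integrable \<mu> (\<lambda>x. f x * w x)" "integrable \<mu> w" "AE x in \<mu>. \<bar>f x\<bar> \<le> B"
  shows "\<bar>\<integral>x. f x * w x \<partial>\<mu>\<bar> \<le> B * (\<integral>x. \<bar>w x\<bar> \<partial>\<mu>)"
proof -
  have "\<bar>\<integral>x. f x * w x \<partial>\<mu>\<bar> \<le> (\<integral>x. \<bar>f x * w x\<bar> \<partial>\<mu>)"
    by (rule integral_abs_bound[unfolded real_norm_def])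
  also have "\<dots> \<le> (\<integral>x. B * \<bar>w x\<bar> \<partial>\<mu>)"
  proof (rule integral_mono_AE)
    show "integrable \<mu> (\<lambda>x. \<bar>f x * w x\<bar>)" using assms(1) by (rule integrable_abs)
    show "integrable \<mu> (\<lambda>x. B * \<bar>w x\<bar>)" using assms(2) by simp
    show "AE x in \<mu>. \<bar>f x * w x\<bar> \<le> B * \<bar>w x\<bar>"
      using assms(3) by eventually_elim (simp add: abs_mult mult_right_mono)
  qed
  finally show ?thesis by simp
qed

lemma integral_derivative_remainder_le:
  fixes g :: "'a::euclidean_space \<Rightarrow> 'x \<Rightarrow> real"
  assumes "AE x in \<mu>. x \<in> S" "integrable \<mu> w"
    and "integrable \<mu> (\<lambda>x. (g y x - g \<theta> x - G \<theta> x (y - \<theta>)) * w x)"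
    and deriv: "\<And>k x. ((\<lambda>k. g k x) has_derivative G k x) (at k)"
    and close: "\<And>x k h. x \<in> S \<Longrightarrow> k \<in> ball \<theta> d \<Longrightarrow> \<bar>G k x h - G \<theta> x h\<bar> \<le> e * norm h"
    and "y \<in> ball \<theta> d"
  shows "\<bar>\<integral>x. (g y x - g \<theta> x - G \<theta> x (y - \<theta>)) * w x \<partial>\<mu>\<bar> \<le> e * norm (y - \<theta>) * (\<integral>x. \<bar>w x\<bar> \<partial>\<mu>)"
proof (rule abs_integral_mult_le[OF assms(3,2)])
  show "AE x in \<mu>. \<bar>g y x - g \<theta> x - G \<theta> x (y - \<theta>)\<bar> \<le> e * norm (y - \<theta>)"
    using assms(1)
  proof eventually_elim
    case (elim x)
    show ?case using close[OF elim] \<open>y \<in> ball \<theta> d\<close> deriv by (intro has_derivative_remainder_bound)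
  qed
qed

lemma has_derivative_parametric_integral:
  fixes \<mu> :: "'x::euclidean_space measure"
    and g :: "'a::euclidean_space \<Rightarrow> 'x \<Rightarrow> real" and G :: "'a \<Rightarrow> 'x \<Rightarrow> 'a \<Rightarrow> real"
  assumes "sets \<mu> = sets borel" "compact S" "AE x in \<mu>. x \<in> S" and w: "integrable \<mu> w"
    and g_cont: "continuous_on UNIV (\<lambda>p. g (fst p) (snd p))"
    and deriv: "\<And>k x. ((\<lambda>k. g k x) has_derivative G k x) (at k)"
    and G_cont: "\<And>h. continuous_on UNIV (\<lambda>p. G (fst p) (snd p) h)"
  shows "((\<lambda>k. \<integral>x. g k x * w x \<partial>\<mu>) has_derivative (\<lambda>h. \<integral>x. G \<theta> x h * w x \<partial>\<mu>)) (at \<theta>)"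
proof -
  have linear_G: "linear (G k x)" for k x using has_derivative_linear deriv by metis
  have integrable: "integrable \<mu> (\<lambda>x. F (k, x) * w x)" if "continuous_on UNIV F" for F :: "'a \<times> 'x \<Rightarrow> real" and k
  proof -
    have "continuous_on UNIV (Pair k :: 'x \<Rightarrow> 'a \<times> 'x)" by (intro continuous_intros)
    then show ?thesis
      by (rule integrable_continuous_mult_compact_support[OF continuous_on_compose2[OF that] assms(2,3) w assms(1)])
        simp
  qed
  have integrable_g: "integrable \<mu> (\<lambda>x. g k x * w x)" and integrable_G: "integrable \<mu> (\<lambda>x. G k x h * w x)" for k h
    using integrable[OF g_cont, of k] integrable[OF G_cont, of k] by simp_all
  have "linear (\<lambda>h. \<integral>x. G \<theta> x h * w x \<partial>\<mu>)"
    using integrable_G by (intro linearI) (simp_all add: linear_add[OF linear_G] linear_cmul[OF linear_G]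
        distrib_right mult.assoc)
  then have bounded_linear: "bounded_linear (\<lambda>h. \<integral>x. G \<theta> x h * w x \<partial>\<mu>)"
    by (simp add: linear_conv_bounded_linear)
  define W where "W = (\<integral>x. \<bar>w x\<bar> \<partial>\<mu>)"
  have "W \<ge> 0" by (simp add: W_def)
  show ?thesis
    unfolding has_derivative_at_alt
  proof (intro conjI allI impI bounded_linear)
    fix e :: real assume "e > 0"
    define e' where "e' = e / (W + 1)"
    have "e' > 0" "e' * W \<le> e" using \<open>e > 0\<close> \<open>W \<ge> 0\<close> by (simp_all add: e'_def field_simps)
    obtain d where "d > 0" and d: "\<And>x k h. x \<in> S \<Longrightarrow> k \<in> ball \<theta> d \<Longrightarrow> \<bar>G k x h - G \<theta> x h\<bar> \<le> e' * norm h"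
      using continuous_derivative_uniform_bound[OF G_cont linear_G assms(2) \<open>e' > 0\<close>] by blast
    have "norm ((\<integral>x. g y x * w x \<partial>\<mu>) - (\<integral>x. g \<theta> x * w x \<partial>\<mu>) - (\<integral>x. G \<theta> x (y - \<theta>) * w x \<partial>\<mu>))
        \<le> e * norm (y - \<theta>)" if "norm (y - \<theta>) < d" for y
    proof -
      have "norm ((\<integral>x. g y x * w x \<partial>\<mu>) - (\<integral>x. g \<theta> x * w x \<partial>\<mu>) - (\<integral>x. G \<theta> x (y - \<theta>) * w x \<partial>\<mu>))
          = \<bar>\<integral>x. (g y x - g \<theta> x - G \<theta> x (y - \<theta>)) * w x \<partial>\<mu>\<bar>"
        using integrable_g integrable_G by (simp add: left_diff_distrib)
      also have "\<dots> \<le> e' * norm (y - \<theta>) * W"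
        unfolding W_def using that integrable_g integrable_G
        by (intro integral_derivative_remainder_le[OF assms(3) w _ deriv d])
          (simp_all add: left_diff_distrib dist_norm norm_minus_commute)
      also have "\<dots> \<le> e * norm (y - \<theta>)"
        using \<open>e' * W \<le> e\<close> by (metis mult.commute mult.left_commute mult_right_mono norm_ge_zero)
      finally show ?thesis .
    qed
    then show "\<exists>d>0. \<forall>y. norm (y - \<theta>) < d \<longrightarrow> norm ((\<integral>x. g y x * w x \<partial>\<mu>) - (\<integral>x. g \<theta> x * w x \<partial>\<mu>)
        - (\<integral>x. G \<theta> x (y - \<theta>) * w x \<partial>\<mu>)) \<le> e * norm (y - \<theta>)"
      using \<open>d > 0\<close> by blast
  qed
qed

section \<open>Square-integrable random variables\<close>

definition square_integrable :: "'a measure \<Rightarrow> ('a \<Rightarrow> real) \<Rightarrow> bool" where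
  "square_integrable M X \<longleftrightarrow> X \<in> borel_measurable M \<and> integrable M (\<lambda>\<omega>. (X \<omega>)\<^sup>2)"

lemma square_integrable_mult:
  assumes "square_integrable M X" "square_integrable M Y"
  shows "integrable M (\<lambda>\<omega>. X \<omega> * Y \<omega>)"
proof (rule Bochner_Integration.integrable_bound)
  show "integrable M (\<lambda>\<omega>. (X \<omega>)\<^sup>2 + (Y \<omega>)\<^sup>2)" using assms by (simp add: square_integrable_def)
  show "(\<lambda>\<omega>. X \<omega> * Y \<omega>) \<in> borel_measurable M"
    using assms by (simp add: square_integrable_def borel_measurable_times)
  have "\<bar>X \<omega> * Y \<omega>\<bar> \<le> (X \<omega>)\<^sup>2 + (Y \<omega>)\<^sup>2" for \<omega>
  proof -
    have "2 * \<bar>X \<omega> * Y \<omega>\<bar> \<le> (X \<omega>)\<^sup>2 + (Y \<omega>)\<^sup>2"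
      using sum_squares_bound[of "\<bar>X \<omega>\<bar>" "\<bar>Y \<omega>\<bar>"] by (simp add: abs_mult mult.assoc)
    then show ?thesis by linarith
  qed
  then show "AE \<omega> in M. norm (X \<omega> * Y \<omega>) \<le> norm ((X \<omega>)\<^sup>2 + (Y \<omega>)\<^sup>2)" by simp
qed

lemma square_integrable_add:
  assumes "square_integrable M X" "square_integrable M Y"
  shows "square_integrable M (\<lambda>\<omega>. X \<omega> + Y \<omega>)"
proof -
  have "integrable M (\<lambda>\<omega>. (X \<omega>)\<^sup>2 + (Y \<omega>)\<^sup>2 + 2 * (X \<omega> * Y \<omega>))"
    using assms square_integrable_mult[OF assms] by (simp add: square_integrable_def)
  then show ?thesis
    using assms by (simp add: square_integrable_def power2_sum mult.assoc borel_measurable_add)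
qed

lemma square_integrable_cmult:
  "square_integrable M X \<Longrightarrow> square_integrable M (\<lambda>\<omega>. c * X \<omega>)"
  by (simp add: square_integrable_def power_mult_distrib borel_measurable_times)

lemma square_integrable_sum:
  "(\<And>a. a \<in> I \<Longrightarrow> square_integrable M (X a)) \<Longrightarrow> square_integrable M (\<lambda>\<omega>. \<Sum>a\<in>I. X a \<omega>)"
proof (induction I rule: infinite_finite_induct)
  case (insert a I)
  then have "square_integrable M (\<lambda>\<omega>. \<Sum>a\<in>I. X a \<omega>)" by blast
  with insert show ?case by (simp add: square_integrable_add)
qed (simp_all add: square_integrable_def)

lemma square_integrable_cong:
  "(\<And>\<omega>. \<omega> \<in> space M \<Longrightarrow> X \<omega> = Y \<omega>) \<Longrightarrow> square_integrable M X \<longleftrightarrow> square_integrable M Y"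
  unfolding square_integrable_def
  by (metis (no_types, lifting) Bochner_Integration.integrable_cong measurable_cong)

lemma (in finite_measure) square_integrable_const: "square_integrable M (\<lambda>_. c)"
  by (simp add: square_integrable_def)

lemma (in prob_space) normal_distributed_square_integrable:
  assumes "\<sigma> > 0" and D: "distributed M lborel Y (normal_density \<mu> \<sigma>)"
  shows "square_integrable M Y"
proof -
  have "Y \<in> borel_measurable M"
    using distributed_measurable[OF D] by (simp add: measurable_lborel2)
  moreover have "integrable M (\<lambda>\<omega>. (Y \<omega> - expectation Y)\<^sup>2)"
    using normal_distributed_variance[OF assms] \<open>\<sigma> > 0\<close> not_integrable_integral_eq by force
  ultimately have "square_integrable M (\<lambda>\<omega>. (Y \<omega> - expectation Y) + expectation Y)"
    by (intro square_integrable_add square_integrable_const) (simp add: square_integrable_def)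
  then show ?thesis by simp
qed

lemma (in prob_space) normal_distributed_not_AE_const:
  assumes "\<sigma> > 0" and D: "distributed M lborel Y (normal_density \<mu> \<sigma>)"
  shows "\<not> (AE \<omega> in M. Y \<omega> = k)"
proof
  assume const: "AE \<omega> in M. Y \<omega> = k"
  have "Y \<in> borel_measurable M"
    using distributed_measurable[OF D] by (simp add: measurable_lborel2)
  then have "expectation Y = k"
    using integral_cong_AE[OF _ _ const] by (simp add: prob_space)
  then have "variance Y = 0"
    using const by (intro integral_eq_zero_AE) auto
  then show False using normal_distributed_variance[OF assms] \<open>\<sigma> > 0\<close> by simp
qed

text \<open>A null vector \<open>c\<close> of the covariance matrix makes \<open>\<Sum>a. c a * Z a\<close> a random variable of
  variance \<open>c\<^sup>T Cov c = 0\<close>.\<close>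

lemma (in prob_space) cov_matrix_null_vector_AE_const:
  assumes "finite I" and sq: "\<And>a. a \<in> I \<Longrightarrow> square_integrable M (\<lambda>\<omega>. Z \<omega> a)"
    and null: "\<And>a. a \<in> I \<Longrightarrow> (\<Sum>b\<in>I. cov_matrix M Z a b * c b) = 0"
  shows "AE \<omega> in M. (\<Sum>a\<in>I. c a * Z \<omega> a) = (\<Sum>a\<in>I. c a * expectation (\<lambda>\<omega>. Z \<omega> a))"
proof -
  define U where "U a \<omega> = Z \<omega> a - expectation (\<lambda>\<omega>. Z \<omega> a)" for a \<omega>
  define V where "V \<omega> = (\<Sum>a\<in>I. c a * U a \<omega>)" for \<omega>
  have sq_U: "square_integrable M (U a)" if "a \<in> I" for a
    unfolding U_def diff_conv_add_uminus
    by (intro square_integrable_add sq[OF that] square_integrable_const)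
  have sq_V: "square_integrable M V"
    unfolding V_def by (intro square_integrable_sum square_integrable_cmult sq_U)
  have "(\<integral>\<omega>. (V \<omega>)\<^sup>2 \<partial>M) = (\<Sum>a\<in>I. c a * (\<Sum>b\<in>I. c b * (\<integral>\<omega>. U a \<omega> * U b \<omega> \<partial>M)))"
    using square_integrable_mult[OF sq_U sq_U]
    by (simp add: V_def power2_eq_square sum_distrib_left sum_distrib_right mult_ac)
  also have "\<dots> = (\<Sum>a\<in>I. c a * (\<Sum>b\<in>I. cov_matrix M Z a b * c b))"
    by (simp add: cov_matrix_def U_def mult.commute)
  also have "\<dots> = 0" using null by simp
  finally have "AE \<omega> in M. (V \<omega>)\<^sup>2 = 0"
    using integral_nonneg_eq_0_iff_AE[of M "\<lambda>\<omega>. (V \<omega>)\<^sup>2"] sq_V by (simp add: square_integrable_def)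
  then show ?thesis
    by eventually_elim (simp add: V_def U_def right_diff_distrib sum_subtractf)
qed

section \<open>The response kernel\<close>

lemma abs_le_square_plus_1: "\<bar>t::real\<bar> \<le> 1 + t\<^sup>2"
proof -
  have "2 * \<bar>t\<bar> \<le> 1 + t\<^sup>2"
    using sum_squares_bound[of "\<bar>t\<bar>" 1] by simp
  then show ?thesis by linarith
qed

lemma AE_in_msupport:
  fixes \<mu> :: "'x::second_countable_topology measure"
  assumes "sets \<mu> = sets borel"
  shows "AE x in \<mu>. x \<in> msupport \<mu>"
proof -
  obtain B :: "'x set set" where B: "countable B" "\<And>C. C \<in> B \<Longrightarrow> open C"
    "\<And>S. open S \<Longrightarrow> \<exists>U. U \<subseteq> B \<and> S = \<Union>U"
    using univ_second_countable by blast
  define N where "N = {C \<in> B. emeasure \<mu> C = 0}"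
  have "(\<Union>C\<in>N. C) \<in> null_sets \<mu>"
    using B(1,2) assms by (intro null_sets_UN') (auto simp: N_def null_sets_def intro: countable_subset)
  moreover have "x \<in> (\<Union>C\<in>N. C)" if "x \<notin> msupport \<mu>" for x
  proof -
    obtain U where U: "open U" "x \<in> U" "emeasure \<mu> U = 0"
      using \<open>x \<notin> msupport \<mu>\<close> by (auto simp: msupport_def)
    obtain V where V: "V \<subseteq> B" "U = \<Union>V" using B(3)[OF U(1)] by blast
    then obtain C where C: "C \<in> V" "x \<in> C" using U(2) by blast
    have "emeasure \<mu> C \<le> emeasure \<mu> U"
      using C V U(1) B(2) assms by (intro emeasure_mono) auto
    then show ?thesis using C V U(3) by (auto simp: N_def)
  qed
  ultimately show ?thesis by (auto intro: AE_I')
qed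

locale square_integrable_kernel =
  fixes PX :: "(real ^ 'i::finite) measure" and MM :: "'m measure"
    and K :: "'m \<times> (real ^ 'i) \<Rightarrow> real measure" and m :: 'm
  assumes PX_prob: "prob_space PX" and PX_borel: "sets PX = sets borel"
    and K_kernel: "K \<in> measurable (MM \<Otimes>\<^sub>M borel) (prob_algebra borel)"
    and m_space: "m \<in> space MM"
    and Y_sq: "(\<integral>\<^sup>+x. (\<integral>\<^sup>+y. ennreal (y\<^sup>2) \<partial>K (m, x)) \<partial>PX) < \<infinity>"
begin

definition second_moment :: "real ^ 'i \<Rightarrow> real" where
  "second_moment x = (\<integral>y. y\<^sup>2 \<partial>K (m, x))"

lemma prob_space_K: "prob_space (K (m, x))" and sets_K: "sets (K (m, x)) = sets borel"
proof -
  have "K (m, x) \<in> space (prob_algebra borel)"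
    using measurable_space[OF K_kernel] m_space by (simp add: space_pair_measure)
  then show "prob_space (K (m, x))" "sets (K (m, x)) = sets borel" by (auto simp: space_prob_algebra)
qed

lemma K_measurable: "(\<lambda>x. K (m, x)) \<in> measurable PX (subprob_algebra borel)"
proof -
  have "(\<lambda>x. K (m, x)) \<in> measurable borel (prob_algebra borel)"
    using measurable_compose[OF measurable_Pair1'[OF m_space] K_kernel] by simp
  then show ?thesis
    using measurable_prob_algebraD measurable_cong_sets[OF PX_borel refl] by blast
qed

lemma borel_measurable_K: "f \<in> borel_measurable borel \<Longrightarrow> f \<in> borel_measurable (K (m, x))"
  using measurable_cong_sets[OF sets_K refl] by blast

lemma target_measurable [measurable]: "target K m \<in> borel_measurable PX"
  unfolding target_def[abs_def]
  by (rule measurable_compose[OF K_measurable integral_measurable_subprob_algebra]) simp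

lemma second_moment_measurable [measurable]: "second_moment \<in> borel_measurable PX"
  unfolding second_moment_def[abs_def]
  by (rule measurable_compose[OF K_measurable integral_measurable_subprob_algebra]) simp

lemma integrable_square_K_pred [measurable]:
  "Measurable.pred PX (\<lambda>x. integrable (K (m, x)) (\<lambda>y. y\<^sup>2))"
  by (rule measurable_compose[OF K_measurable integrable_measurable_subprob_algebra]) simp

lemma AE_integrable_square_K: "AE x in PX. integrable (K (m, x)) (\<lambda>y. y\<^sup>2)"
proof -
  have "(\<lambda>x. \<integral>\<^sup>+y. ennreal (y\<^sup>2) \<partial>K (m, x)) \<in> borel_measurable PX"
    by (rule measurable_compose[OF K_measurable nn_integral_measurable_subprob_algebra]) simp
  then have "AE x in PX. (\<integral>\<^sup>+y. ennreal (y\<^sup>2) \<partial>K (m, x)) \<noteq> \<infinity>"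
    by (rule nn_integral_PInf_AE) (use Y_sq in simp)
  then show ?thesis
    by eventually_elim
      (use borel_measurable_K[of "\<lambda>y. y\<^sup>2"] in \<open>simp add: integrable_iff_bounded top.not_eq_extremum\<close>)
qed

lemma integrable_K_of_square:
  assumes "integrable (K (m, x)) (\<lambda>y. y\<^sup>2)"
  shows "integrable (K (m, x)) (\<lambda>y. y)"
proof -
  interpret prob_space "K (m, x)" by (rule prob_space_K)
  show ?thesis
    by (rule square_integrable_imp_integrable[OF borel_measurable_K]) (simp_all add: assms)
qed

lemma integrable_second_moment: "integrable PX second_moment"
proof -
  have "(\<integral>\<^sup>+x. ennreal (norm (second_moment x)) \<partial>PX) = (\<integral>\<^sup>+x. (\<integral>\<^sup>+y. ennreal (y\<^sup>2) \<partial>K (m, x)) \<partial>PX)"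
    using AE_integrable_square_K
    by (intro nn_integral_cong_AE, eventually_elim)
      (simp add: second_moment_def nn_integral_eq_integral)
  then show ?thesis unfolding integrable_iff_bounded using Y_sq by simp
qed

lemma integrable_target: "integrable PX (target K m)"
proof (rule Bochner_Integration.integrable_bound)
  interpret prob_space PX by (rule PX_prob)
  show "integrable PX (\<lambda>x. 1 + second_moment x)" using integrable_second_moment by simp
  show "AE x in PX. norm (target K m x) \<le> norm (1 + second_moment x)"
    using AE_integrable_square_K
  proof eventually_elim
    case (elim x)
    interpret K: prob_space "K (m, x)" by (rule prob_space_K)
    have "\<bar>target K m x\<bar> \<le> (\<integral>y. \<bar>y\<bar> \<partial>K (m, x))" unfolding target_def by (rule integral_abs_bound)
    also have "\<dots> \<le> (\<integral>y. 1 + y\<^sup>2 \<partial>K (m, x))"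
      using elim integrable_K_of_square[OF elim] abs_le_square_plus_1 by (intro integral_mono) auto
    also have "\<dots> = 1 + second_moment x" using elim by (simp add: second_moment_def K.prob_space)
    finally show ?case by (simp add: second_moment_def)
  qed
qed simp

text \<open>The second case reflects the junk value 0 of the Bochner integral of a non-integrable
  function.\<close>

lemma integral_K_squared_error:
  "(\<integral>y. (r - y)\<^sup>2 \<partial>K (m, x)) =
     (if integrable (K (m, x)) (\<lambda>y. y\<^sup>2) then r\<^sup>2 - 2 * r * target K m x + second_moment x else 0)"
proof -
  interpret prob_space "K (m, x)" by (rule prob_space_K)
  have square: "(r - y)\<^sup>2 = r\<^sup>2 - 2 * r * y + y\<^sup>2" for y by (simp add: power2_diff)
  show ?thesis
  proof (cases "integrable (K (m, x)) (\<lambda>y. y\<^sup>2)")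
    case True
    then show ?thesis
      using integrable_K_of_square[OF True]
      by (simp add: square target_def second_moment_def prob_space)
  next
    case False
    have "\<not> integrable (K (m, x)) (\<lambda>y. (r - y)\<^sup>2)"
    proof
      assume sq: "integrable (K (m, x)) (\<lambda>y. (r - y)\<^sup>2)"
      have "(\<lambda>y. r - y) \<in> borel_measurable (K (m, x))" by (intro borel_measurable_K) simp
      then have "integrable (K (m, x)) (\<lambda>y. r - y)"
        using sq by (rule square_integrable_imp_integrable)
      then have "integrable (K (m, x)) (\<lambda>y. (r - y)\<^sup>2 + r\<^sup>2 - 2 * r * (r - y))"
        using sq by simp
      moreover have "(r - y)\<^sup>2 + r\<^sup>2 - 2 * r * (r - y) = y\<^sup>2" for y
        by (simp add: power2_eq_square algebra_simps)
      ultimately show False using False by simp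
    qed
    then show ?thesis using False by (simp add: not_integrable_integral_eq)
  qed
qed

lemma integral_squared_error:
  assumes "continuous_on UNIV r" "compact S" "AE x in PX. x \<in> S"
  shows "(\<integral>x. (\<integral>y. (r x - y)\<^sup>2 \<partial>K (m, x)) \<partial>PX)
    = (\<integral>x. (r x)\<^sup>2 \<partial>PX) - 2 * (\<integral>x. r x * target K m x \<partial>PX) + (\<integral>x. second_moment x \<partial>PX)"
proof -
  interpret prob_space PX by (rule PX_prob)
  have [measurable]: "r \<in> borel_measurable PX"
    using borel_measurable_continuous_onI[OF assms(1)] measurable_cong_sets[OF PX_borel refl] by blast
  have "integrable PX (\<lambda>x. (r x)\<^sup>2 * 1)"
    using assms PX_borel by (intro integrable_continuous_mult_compact_support continuous_intros) auto
  moreover have "integrable PX (\<lambda>x. r x * target K m x)"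
    using assms integrable_target PX_borel by (intro integrable_continuous_mult_compact_support)
  moreover have "(\<integral>x. (\<integral>y. (r x - y)\<^sup>2 \<partial>K (m, x)) \<partial>PX)
      = (\<integral>x. (r x)\<^sup>2 - 2 * r x * target K m x + second_moment x \<partial>PX)"
    using AE_integrable_square_K
    by (intro integral_cong_AE) (auto simp: integral_K_squared_error elim: AE_mp)
  ultimately show ?thesis using integrable_second_moment by (simp add: mult.assoc)
qed

end

section \<open>Derivatives of the network response and of the cost\<close>

definition resp_deriv :: "(real \<Rightarrow> real) \<Rightarrow> ('i::finite, 'j::finite) param \<Rightarrow> real ^ 'i \<Rightarrow> ('i, 'j) param \<Rightarrow> real" where
  "resp_deriv \<psi> \<theta> x h = pc h +
     (\<Sum>j\<in>UNIV. deriv \<psi> (preact \<theta> x j) * preact h x j * pv \<theta> $ j + \<psi> (preact \<theta> x j) * pv h $ j)"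

lemma has_derivative_vec_nth [derivative_intros]:
  "(f has_derivative f') F \<Longrightarrow> ((\<lambda>x. f x $ i) has_derivative (\<lambda>h. f' h $ i)) F"
  by (rule bounded_linear.has_derivative[OF bounded_linear_vec_nth])

lemma preact_add: "preact (a + b) x j = preact a x j + preact b x j"
  and preact_scaleR: "preact (t *\<^sub>R a) x j = t * preact a x j"
  by (simp_all add: preact_def pb_def pW_def sum.distrib algebra_simps sum_distrib_left)

lemma pv_add: "pv (a + b) = pv a + pv b" and pv_scaleR: "pv (t *\<^sub>R a) = t *\<^sub>R pv a"
  by (simp_all add: pv_def)

lemma has_derivative_preact: "((\<lambda>\<theta>. preact \<theta> x j) has_derivative (\<lambda>h. preact h x j)) F"
  unfolding preact_def pb_def pW_def by (intro derivative_eq_intros) auto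

lemma has_derivative_resp:
  assumes "\<And>t. (\<psi> has_real_derivative deriv \<psi> t) (at t)"
  shows "((\<lambda>\<theta>. resp \<psi> \<theta> x) has_derivative resp_deriv \<psi> \<theta> x) (at \<theta>)"
proof -
  have "((\<lambda>\<theta>. \<psi> (preact \<theta> x j)) has_derivative (\<lambda>h. preact h x j * deriv \<psi> (preact \<theta> x j))) (at \<theta>)" for j
    by (rule DERIV_compose_FDERIV[OF assms has_derivative_preact])
  moreover have "((\<lambda>\<theta>. pv \<theta> $ j) has_derivative (\<lambda>h. pv h $ j)) (at \<theta>)" for j
    unfolding pv_def by (intro derivative_eq_intros) auto
  moreover have "(pc has_derivative pc) (at \<theta>)"
    unfolding pc_def[abs_def] by (intro derivative_eq_intros) auto
  ultimately have "((\<lambda>\<theta>. pc \<theta> + (\<Sum>j\<in>UNIV. \<psi> (preact \<theta> x j) * pv \<theta> $ j)) has_derivative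
     (\<lambda>h. pc h + (\<Sum>j\<in>UNIV. \<psi> (preact \<theta> x j) * pv h $ j + preact h x j * deriv \<psi> (preact \<theta> x j) * pv \<theta> $ j))) (at \<theta>)"
    by (intro has_derivative_add has_derivative_sum has_derivative_mult)
  then show ?thesis
    unfolding resp_def[abs_def] resp_deriv_def[abs_def] by (simp add: algebra_simps)
qed

lemma linear_resp_deriv: "linear (resp_deriv \<psi> \<theta> x)"
  by (intro linearI)
    (simp_all add: resp_deriv_def preact_add preact_scaleR pv_add pv_scaleR pc_def sum.distrib
      sum_distrib_left algebra_simps)

lemma continuous_on_UNIV_compose:
  "continuous_on UNIV f \<Longrightarrow> continuous_on S g \<Longrightarrow> continuous_on S (\<lambda>x. f (g x))"
  by (rule continuous_on_compose2[of UNIV f S g]) auto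

lemma continuous_on_preact: "continuous_on UNIV (\<lambda>x. preact \<theta> x j)"
  unfolding preact_def by (intro continuous_intros)

lemma continuous_on_preact_snd: "continuous_on UNIV (\<lambda>p. preact \<theta> (snd p) j)"
  unfolding preact_def by (intro continuous_intros)

lemma continuous_on_resp:
  assumes "continuous_on UNIV \<psi>"
  shows "continuous_on UNIV (\<lambda>p. resp \<psi> (fst p) (snd p :: real ^ 'i::finite))"
  unfolding resp_def preact_def pc_def pv_def pb_def pW_def
  by (intro continuous_intros continuous_on_UNIV_compose[OF assms])

lemma continuous_on_resp_deriv:
  assumes "continuous_on UNIV \<psi>" "continuous_on UNIV (deriv \<psi>)"
  shows "continuous_on UNIV (\<lambda>p. resp_deriv \<psi> (fst p) (snd p :: real ^ 'i::finite) h)"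
  unfolding resp_deriv_def preact_def pc_def pv_def pb_def pW_def
  by (intro continuous_intros continuous_on_UNIV_compose[OF assms(1)] continuous_on_UNIV_compose[OF assms(2)])

lemma pdiff_eq_derivative:
  assumes "(f has_derivative D) (at x)"
  shows "pdiff f e x = D e"
proof -
  have "((\<lambda>t. x + t *\<^sub>R e) has_derivative (\<lambda>t. t *\<^sub>R e)) (at 0)"
    by (intro derivative_eq_intros) auto
  moreover have "(f has_derivative D) (at (x + 0 *\<^sub>R e))" using assms by simp
  ultimately have "((\<lambda>t. f (x + t *\<^sub>R e)) has_derivative (\<lambda>t. D (t *\<^sub>R e))) (at 0)"
    using has_derivative_compose[of "\<lambda>t. x + t *\<^sub>R e" "\<lambda>t. t *\<^sub>R e" 0 UNIV f D] by simp
  moreover have "(\<lambda>t. D (t *\<^sub>R e)) = (*) (D e)"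
    using linear_scale[OF has_derivative_linear[OF assms]] by (auto simp: fun_eq_iff)
  ultimately show ?thesis
    unfolding pdiff_def by (intro DERIV_imp_deriv) (simp add: has_field_derivative_def)
qed

lemma gradient_inner_eq_derivative:
  fixes f :: "'a::euclidean_space \<Rightarrow> real"
  assumes "(f has_derivative F) (at x)"
  shows "gradient f x \<bullet> e = F e"
proof -
  define D where "D = (\<Sum>b\<in>Basis. F b *\<^sub>R b)"
  have F_eq: "F = (\<lambda>h. h \<bullet> D)"
  proof
    fix h
    show "F h = h \<bullet> D"
      using linear_real_componentwise[OF has_derivative_linear[OF assms], of h]
      by (simp add: D_def inner_sum_right mult.commute)
  qed
  have "gradient f x = D"
    unfolding gradient_def
  proof (rule the_equality)
    show "GDERIV f x :> D" using assms F_eq by (simp add: gderiv_def)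
    fix D' assume "GDERIV f x :> D'"
    then have "(\<lambda>h. h \<bullet> D') = (\<lambda>h. h \<bullet> D)"
      using \<open>GDERIV f x :> D\<close> unfolding gderiv_def by (rule has_derivative_unique)
    then have "(D' - D) \<bullet> D' = (D' - D) \<bullet> D" by meson
    then have "(D' - D) \<bullet> (D' - D) = 0" by (simp add: inner_diff_right)
    then show "D' = D" by simp
  qed
  then show ?thesis by (simp add: F_eq inner_commute)
qed

definition hidden_unit_direction :: "'j \<Rightarrow> ('i::finite, 'j::finite) param \<Rightarrow> bool" where
  "hidden_unit_direction j d \<longleftrightarrow> pc d = 0 \<and> pv d = 0 \<and> (\<forall>x j'. j' \<noteq> j \<longrightarrow> preact d x j' = 0)"

lemma resp_deriv_hidden_unit_direction:
  assumes "hidden_unit_direction j d"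
  shows "resp_deriv \<psi> \<theta> x d = deriv \<psi> (preact \<theta> x j) * preact d x j * pv \<theta> $ j"
proof -
  have "resp_deriv \<psi> \<theta> x d = (\<Sum>j'\<in>UNIV. deriv \<psi> (preact \<theta> x j') * preact d x j' * pv \<theta> $ j')"
    using assms by (simp add: resp_deriv_def hidden_unit_direction_def)
  also have "\<dots> = (\<Sum>j'\<in>UNIV. if j' = j then deriv \<psi> (preact \<theta> x j) * preact d x j * pv \<theta> $ j else 0)"
    using assms unfolding hidden_unit_direction_def by (intro sum.cong) auto
  finally show ?thesis by simp
qed

lemma preact_dir_b: "preact (dir_b j) x j' = (if j' = j then 1 else 0)"
  by (simp add: dir_b_def preact_def pb_def pW_def axis_def)

lemma axis_axis_nth: "axis i (axis j (1::real)) $ i' $ j' = (if i' = i \<and> j' = j then 1 else 0)"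
  by (simp add: axis_def)

lemma preact_dir_w: "preact (dir_w i j) x j' = (if j' = j then x $ i else 0)"
proof -
  have "preact (dir_w i j) x j' = (\<Sum>i'\<in>UNIV. if i' = i \<and> j' = j then x $ i else 0)"
    unfolding dir_w_def preact_def pb_def pW_def by (simp add: axis_axis_nth if_distrib cong: if_cong)
  then show ?thesis by simp
qed

lemma hidden_unit_direction_dir_b: "hidden_unit_direction j (dir_b j)"
  and hidden_unit_direction_dir_w: "hidden_unit_direction j (dir_w i j)"
  by (simp_all add: hidden_unit_direction_def preact_dir_b preact_dir_w)
    (simp_all add: dir_b_def dir_w_def pc_def pv_def)

locale network_kernel = square_integrable_kernel PX MM K m
  for PX :: "(real ^ 'i::finite) measure" and MM K m +
  fixes \<psi> :: "real \<Rightarrow> real"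
  assumes psi_deriv: "\<And>t. (\<psi> has_real_derivative deriv \<psi> t) (at t)"
    and psi_deriv2: "\<And>t. (deriv \<psi> has_real_derivative deriv (deriv \<psi>) t) (at t)"
    and psi_deriv2_cont: "continuous_on UNIV (deriv (deriv \<psi>))"
    and support_compact: "compact (msupport PX)"
begin

lemma psi_cont: "continuous_on UNIV \<psi>" and psi_deriv_cont: "continuous_on UNIV (deriv \<psi>)"
  using psi_deriv psi_deriv2 by (meson DERIV_isCont continuous_at_imp_continuous_on)+

lemma AE_support: "AE x in PX. x \<in> msupport PX"
  by (rule AE_in_msupport[OF PX_borel])

lemmas has_derivative_integral = has_derivative_parametric_integral[OF PX_borel support_compact AE_support]

lemma has_derivative_Jhat:
  "(Jhat \<psi> PX K m has_derivative (\<lambda>h. \<integral>x. resp_deriv \<psi> \<theta> x h * target K m x \<partial>PX)) (at \<theta>)"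
  unfolding Jhat_def[abs_def]
  by (rule has_derivative_integral[OF integrable_target continuous_on_resp[OF psi_cont]
        has_derivative_resp[OF psi_deriv] continuous_on_resp_deriv[OF psi_cont psi_deriv_cont]])

lemma differentiable_integral_resp_square:
  fixes \<theta> :: "('i, 'j::finite) param"
  shows "(\<lambda>\<theta>. \<integral>x. (resp \<psi> \<theta> x)\<^sup>2 \<partial>PX) differentiable (at \<theta>)"
proof -
  interpret prob_space PX by (rule PX_prob)
  have "((\<lambda>\<theta>::('i, 'j) param. \<integral>x. (resp \<psi> \<theta> x)\<^sup>2 * 1 \<partial>PX) has_derivative
      (\<lambda>h. \<integral>x. (2 * resp \<psi> \<theta> x * resp_deriv \<psi> \<theta> x h) * 1 \<partial>PX)) (at \<theta>)"
  proof (rule has_derivative_integral)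
    show "((\<lambda>\<theta>. (resp \<psi> \<theta> x)\<^sup>2) has_derivative (\<lambda>h. 2 * resp \<psi> \<theta> x * resp_deriv \<psi> \<theta> x h)) (at \<theta>)"
      for \<theta> x by (rule has_derivative_eq_rhs[OF has_derivative_power[OF has_derivative_resp[OF psi_deriv]]])
        (simp add: fun_eq_iff)
    show "continuous_on UNIV (\<lambda>p. (resp \<psi> (fst p) (snd p))\<^sup>2)"
      by (intro continuous_intros continuous_on_resp psi_cont)
    show "continuous_on UNIV (\<lambda>p. 2 * resp \<psi> (fst p) (snd p) * resp_deriv \<psi> (fst p) (snd p) h)" for h
      by (intro continuous_intros continuous_on_resp continuous_on_resp_deriv psi_cont psi_deriv_cont)
  qed simp
  then show ?thesis by (auto simp: differentiable_def)
qed

lemma Jcost_eq: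
  fixes R :: "('i, 'j::finite) param \<Rightarrow> real"
  shows "Jcost \<psi> PX K R m = (\<lambda>\<theta>. (\<integral>x. (resp \<psi> \<theta> x)\<^sup>2 \<partial>PX) + R \<theta> - 2 * Jhat \<psi> PX K m \<theta> + (\<integral>x. second_moment x \<partial>PX))"
proof
  fix \<theta> :: "('i, 'j) param"
  have "continuous_on UNIV (\<lambda>x. resp \<psi> \<theta> x)"
    unfolding resp_def by (intro continuous_intros continuous_on_UNIV_compose[OF psi_cont] continuous_on_preact)
  then show "Jcost \<psi> PX K R m \<theta> = (\<integral>x. (resp \<psi> \<theta> x)\<^sup>2 \<partial>PX) + R \<theta> - 2 * Jhat \<psi> PX K m \<theta> + (\<integral>x. second_moment x \<partial>PX)"
    by (simp add: Jcost_def Jhat_def integral_squared_error[OF _ support_compact AE_support])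
qed

lemma gradient_Jcost:
  assumes "R differentiable (at \<theta>)"
  shows "gradient (Jcost \<psi> PX K R m) \<theta> \<bullet> e =
    gradient (\<lambda>\<theta>. (\<integral>x. (resp \<psi> \<theta> x)\<^sup>2 \<partial>PX) + R \<theta>) \<theta> \<bullet> e - 2 * (\<integral>x. resp_deriv \<psi> \<theta> x e * target K m x \<partial>PX)"
proof -
  obtain D where D: "((\<lambda>\<theta>. (\<integral>x. (resp \<psi> \<theta> x)\<^sup>2 \<partial>PX) + R \<theta>) has_derivative D) (at \<theta>)"
    using differentiable_add[OF differentiable_integral_resp_square assms] by (auto simp: differentiable_def)
  then have "(Jcost \<psi> PX K R m has_derivative
      (\<lambda>h. D h - 2 * (\<integral>x. resp_deriv \<psi> \<theta> x h * target K m x \<partial>PX) + 0)) (at \<theta>)"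
    unfolding Jcost_eq
    by (intro has_derivative_add has_derivative_diff has_derivative_mult_right has_derivative_Jhat
        has_derivative_const)
  then show ?thesis
    using gradient_inner_eq_derivative[OF D] by (simp add: gradient_inner_eq_derivative)
qed

lemma pdiff_pdiff_Jhat:
  assumes d1: "hidden_unit_direction j d1" and d2: "hidden_unit_direction j d2"
  shows "pdiff (pdiff (Jhat \<psi> PX K m) d1) d2 \<theta> =
    (\<integral>x. deriv (deriv \<psi>) (preact \<theta> x j) * preact d2 x j * preact d1 x j * pv \<theta> $ j * target K m x \<partial>PX)"
proof -
  define g where "g t x = deriv \<psi> (preact \<theta> x j + t * preact d2 x j) * (preact d1 x j * pv \<theta> $ j)"
    for t :: real and x :: "real ^ 'i"
  define G where "G t x s = s * (deriv (deriv \<psi>) (preact \<theta> x j + t * preact d2 x j) * preact d2 x j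
      * (preact d1 x j * pv \<theta> $ j))" for t :: real and x :: "real ^ 'i" and s :: real
  \<comment> \<open>along the line \<open>\<theta> + t d2\<close> the output weights stay those of \<open>\<theta>\<close>\<close>
  have "pv (\<theta> + t *\<^sub>R d2) = pv \<theta>" for t using d2 by (simp add: hidden_unit_direction_def pv_add pv_scaleR)
  then have line: "pdiff (Jhat \<psi> PX K m) d1 (\<theta> + t *\<^sub>R d2) = (\<integral>x. g t x * target K m x \<partial>PX)" for t
    unfolding pdiff_eq_derivative[OF has_derivative_Jhat] resp_deriv_hidden_unit_direction[OF d1]
    by (simp add: g_def preact_add preact_scaleR mult_ac)
  have "((\<lambda>t. g t x) has_derivative G t x) (at t)" for t x
    unfolding g_def G_def
    by (rule has_derivative_eq_rhs[OF has_derivative_mult_left[OF DERIV_compose_FDERIV[OF psi_deriv2]]])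
      (auto intro!: derivative_eq_intros simp: fun_eq_iff mult_ac)
  then have "((\<lambda>t. \<integral>x. g t x * target K m x \<partial>PX) has_derivative (\<lambda>s. \<integral>x. G 0 x s * target K m x \<partial>PX)) (at 0)"
    unfolding g_def G_def
    by (intro has_derivative_integral integrable_target continuous_intros continuous_on_preact_snd
        continuous_on_UNIV_compose[OF psi_deriv_cont] continuous_on_UNIV_compose[OF psi_deriv2_cont])
  moreover have "(\<lambda>s. \<integral>x. G 0 x s * target K m x \<partial>PX) = (*) (\<integral>x. G 0 x 1 * target K m x \<partial>PX)"
    by (auto simp: fun_eq_iff G_def mult_ac)
  ultimately have "deriv (\<lambda>t. \<integral>x. g t x * target K m x \<partial>PX) 0 = (\<integral>x. G 0 x 1 * target K m x \<partial>PX)"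
    by (intro DERIV_imp_deriv) (simp add: has_field_derivative_def)
  then show ?thesis
    unfolding pdiff_def[of "pdiff (Jhat \<psi> PX K m) d1"] line by (simp add: G_def mult_ac)
qed

end

section \<open>Polynomial efficiency and linear independence\<close>

definition vec_monomial :: "real ^ 'i::finite \<Rightarrow> ('i \<Rightarrow> nat) \<Rightarrow> real" where
  "vec_monomial x \<alpha> = (\<Prod>i\<in>UNIV. (x $ i) ^ \<alpha> i)"

definition pair_multi_index :: "'i \<Rightarrow> 'i \<Rightarrow> 'i \<Rightarrow> nat" where
  "pair_multi_index i k = (\<lambda>l. unit_multi_index i l + unit_multi_index k l)"

lemma finite_mono_idx: "finite (mono_idx d :: ('i::finite \<Rightarrow> nat) set)"
proof (rule finite_subset)
  show "mono_idx d \<subseteq> PiE (UNIV :: 'i set) (\<lambda>_. {..d})"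
  proof
    fix \<alpha> :: "'i \<Rightarrow> nat" assume "\<alpha> \<in> mono_idx d"
    then have "\<alpha> i \<le> d" for i
      using member_le_sum[of i UNIV \<alpha>] by (simp add: mono_idx_def)
    then show "\<alpha> \<in> PiE UNIV (\<lambda>_. {..d})" by (auto simp: PiE_def extensional_def)
  qed
qed (simp add: finite_PiE)

lemma mpoly_eval_add: "mpoly_eval d (\<lambda>\<alpha>. f \<alpha> + g \<alpha>) x = mpoly_eval d f x + mpoly_eval d g x"
  by (simp add: mpoly_eval_def algebra_simps sum.distrib)

lemma mpoly_eval_sum:
  "finite T \<Longrightarrow> mpoly_eval d (\<lambda>\<alpha>. \<Sum>t\<in>T. f t \<alpha>) x = (\<Sum>t\<in>T. mpoly_eval d (f t) x)"
  by (simp add: mpoly_eval_def sum_distrib_right sum.swap[of _ T])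

lemma mpoly_eval_single:
  assumes "\<beta> \<in> mono_idx d"
  shows "mpoly_eval d (\<lambda>\<alpha>. if \<alpha> = \<beta> then c else 0) x = c * vec_monomial x \<beta>"
proof -
  have "mpoly_eval d (\<lambda>\<alpha>. if \<alpha> = \<beta> then c else 0) x
      = (\<Sum>\<alpha>\<in>mono_idx d. if \<alpha> = \<beta> then c * vec_monomial x \<alpha> else 0)"
    unfolding mpoly_eval_def vec_monomial_def by (intro sum.cong) auto
  then show ?thesis using assms by (simp add: finite_mono_idx)
qed

lemma mpoly_eval_0: "mpoly_eval 0 a x = a (\<lambda>_. 0)"
proof -
  have "mono_idx 0 = {\<lambda>_::'a. 0::nat}" by (auto simp: mono_idx_def fun_eq_iff)
  then show ?thesis by (simp add: mpoly_eval_def)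
qed

lemma vec_monomial_unit: "vec_monomial x (unit_multi_index i) = x $ i"
  by (simp add: vec_monomial_def unit_multi_index_def if_distrib cong: if_cong)

lemma vec_monomial_pair: "vec_monomial x (pair_multi_index i k) = x $ i * x $ k"
  by (simp add: vec_monomial_def pair_multi_index_def power_add prod.distrib
      vec_monomial_unit[unfolded vec_monomial_def])

lemma sum_unit_multi_index: "sum (unit_multi_index i) (UNIV :: 'i::finite set) = 1"
  by (simp add: unit_multi_index_def)

lemma zero_in_mono_idx: "(\<lambda>_. 0) \<in> mono_idx d"
  and unit_in_mono_idx: "d \<ge> 1 \<Longrightarrow> unit_multi_index (i::'i::finite) \<in> mono_idx d"
  and pair_in_mono_idx: "d \<ge> 2 \<Longrightarrow> pair_multi_index (i::'i::finite) k \<in> mono_idx d"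
  by (simp_all add: mono_idx_def sum_unit_multi_index pair_multi_index_def sum.distrib)

lemma unit_multi_index_eq_iff: "unit_multi_index i = unit_multi_index i' \<longleftrightarrow> i = i'"
  by (auto simp: unit_multi_index_def fun_eq_iff)

lemma pair_multi_index_neq_zero: "pair_multi_index i k \<noteq> (\<lambda>_. 0)"
  by (auto simp: pair_multi_index_def unit_multi_index_def fun_eq_iff)

lemma pair_multi_index_neq_unit: "pair_multi_index i k \<noteq> unit_multi_index (i'::'i::finite)"
proof
  assume "pair_multi_index i k = unit_multi_index i'"
  then have "sum (pair_multi_index i k) UNIV = sum (unit_multi_index i') (UNIV :: 'i set)" by simp
  then show False by (simp add: pair_multi_index_def sum.distrib sum_unit_multi_index)
qed

lemma pair_multi_index_eq_iff:
  fixes i k i' k' :: "'i::linorder"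
  assumes "i \<le> k" "i' \<le> k'"
  shows "pair_multi_index i k = pair_multi_index i' k' \<longleftrightarrow> i = i' \<and> k = k'"
proof
  assume eq: "pair_multi_index i k = pair_multi_index i' k'"
  have count: "unit_multi_index i l + unit_multi_index k l = unit_multi_index i' l + unit_multi_index k' l"
    for l using fun_cong[OF eq[unfolded pair_multi_index_def], of l] by simp
  have i: "i = i' \<or> i = k'" using count[of i] by (auto simp: unit_multi_index_def split: if_split_asm)
  have k: "k = i' \<or> k = k'" using count[of k] by (auto simp: unit_multi_index_def split: if_split_asm)
  have i': "i' = i \<or> i' = k" using count[of i'] by (auto simp: unit_multi_index_def split: if_split_asm)
  show "i = i' \<and> k = k'"
  proof (cases "i = k")
    case True
    then show ?thesis using count[of i] by (auto simp: unit_multi_index_def split: if_split_asm)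
  next
    case False
    then show ?thesis using i k i' assms by auto
  qed
qed simp

text \<open>Coefficient vectors of the polynomials \<open>b + \<Sum>i. w i * x$i\<close> and
  \<open>b + \<Sum>i. w i * x$i + \<Sum>i\<le>k. q (i, k) * x$i * x$k\<close>.\<close>

definition linear_coeffs :: "real \<Rightarrow> ('i::finite \<Rightarrow> real) \<Rightarrow> ('i \<Rightarrow> nat) \<Rightarrow> real" where
  "linear_coeffs b w \<alpha> = (if \<alpha> = (\<lambda>_. 0) then b else 0) + (\<Sum>i\<in>UNIV. if \<alpha> = unit_multi_index i then w i else 0)"

definition quadratic_coeffs ::
  "real \<Rightarrow> ('i::{finite,linorder} \<Rightarrow> real) \<Rightarrow> ('i \<times> 'i \<Rightarrow> real) \<Rightarrow> ('i \<Rightarrow> nat) \<Rightarrow> real" where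
  "quadratic_coeffs b w q \<alpha> = linear_coeffs b w \<alpha> +
     (\<Sum>p\<in>{p. fst p \<le> snd p}. if \<alpha> = pair_multi_index (fst p) (snd p) then q p else 0)"

lemma mpoly_eval_linear_coeffs:
  "d \<ge> 1 \<Longrightarrow> mpoly_eval d (linear_coeffs b w) x = b + (\<Sum>i\<in>UNIV. w i * x $ i)"
  unfolding linear_coeffs_def
  by (simp add: mpoly_eval_add mpoly_eval_sum mpoly_eval_single zero_in_mono_idx unit_in_mono_idx
      vec_monomial_unit, simp add: vec_monomial_def)

lemma mpoly_eval_quadratic_coeffs:
  "d \<ge> 2 \<Longrightarrow> mpoly_eval d (quadratic_coeffs b w q) x =
    b + (\<Sum>i\<in>UNIV. w i * x $ i) + (\<Sum>p\<in>{p. fst p \<le> snd p}. q p * (x $ fst p * x $ snd p))"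
  unfolding quadratic_coeffs_def
  by (simp add: mpoly_eval_add mpoly_eval_sum mpoly_eval_single pair_in_mono_idx vec_monomial_pair
      mpoly_eval_linear_coeffs)

lemma linear_coeffs_zero: "linear_coeffs b w (\<lambda>_. 0) = b"
  and linear_coeffs_unit: "linear_coeffs b w (unit_multi_index i) = w i"
  by (simp_all add: linear_coeffs_def unit_multi_index_neq_zero unit_multi_index_neq_zero[symmetric]
      unit_multi_index_eq_iff)

lemma quadratic_coeffs_zero: "quadratic_coeffs b w q (\<lambda>_. 0) = b"
  and quadratic_coeffs_unit: "quadratic_coeffs b w q (unit_multi_index i) = w i"
  by (simp_all add: quadratic_coeffs_def linear_coeffs_zero linear_coeffs_unit
      pair_multi_index_neq_zero[symmetric] pair_multi_index_neq_unit[symmetric])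

lemma quadratic_coeffs_pair:
  assumes "i \<le> k"
  shows "quadratic_coeffs b w q (pair_multi_index i k) = q (i, k)"
proof -
  have "(\<Sum>p\<in>{p. fst p \<le> snd p}. if pair_multi_index i k = pair_multi_index (fst p) (snd p) then q p else 0)
      = (\<Sum>p\<in>{p. fst p \<le> snd p}. if p = (i, k) then q (i, k) else 0)"
    using assms by (intro sum.cong) (auto simp: pair_multi_index_eq_iff)
  then show ?thesis
    using assms by (simp add: quadratic_coeffs_def linear_coeffs_def pair_multi_index_neq_zero
        pair_multi_index_neq_unit)
qed

lemma poly_efficient_012_coeffs_zero:
  fixes \<theta> :: "('i::{finite,linorder}, 'j::finite) param"
  assumes eff: "poly_efficient \<psi> X 0 [0, 1, 2] \<theta>"
    and vanish: "\<forall>x\<in>X. a + (\<Sum>j\<in>UNIV. c j * \<psi> (preact \<theta> x j)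
        + (bl j + (\<Sum>i\<in>UNIV. wl j i * x $ i)) * deriv \<psi> (preact \<theta> x j)
        + (bq j + (\<Sum>i\<in>UNIV. wq j i * x $ i) + (\<Sum>p\<in>{p. fst p \<le> snd p}. q j p * (x $ fst p * x $ snd p)))
          * deriv (deriv \<psi>) (preact \<theta> x j)) = 0"
  shows "a = 0 \<and> c j = 0 \<and> bl j = 0 \<and> wl j i = 0 \<and> bq j = 0 \<and> wq j i = 0 \<and> (i \<le> k \<longrightarrow> q j (i, k) = 0)"
proof -
  define A where "A j k = (if k = 0 then (\<lambda>_. c j) else if k = 1 then linear_coeffs (bl j) (wl j)
      else quadratic_coeffs (bq j) (wq j) (q j))" for j and k :: nat
  have "(\<Sum>k<length [0::nat, 1, 2]. mpoly_eval ([0, 1, 2] ! k) (A j k) x * (deriv ^^ k) \<psi> (preact \<theta> x j))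
      = c j * \<psi> (preact \<theta> x j)
        + (bl j + (\<Sum>i\<in>UNIV. wl j i * x $ i)) * deriv \<psi> (preact \<theta> x j)
        + (bq j + (\<Sum>i\<in>UNIV. wq j i * x $ i) + (\<Sum>p\<in>{p. fst p \<le> snd p}. q j p * (x $ fst p * x $ snd p)))
          * deriv (deriv \<psi>) (preact \<theta> x j)" for j x
    by (simp add: lessThan_Suc numeral_2_eq_2 A_def mpoly_eval_0 mpoly_eval_linear_coeffs
        mpoly_eval_quadratic_coeffs)
  then have "\<forall>x\<in>X. mpoly_eval 0 (\<lambda>_. a) x + (\<Sum>j\<in>UNIV. \<Sum>k<length [0::nat, 1, 2].
      mpoly_eval ([0, 1, 2] ! k) (A j k) x * (deriv ^^ k) \<psi> (preact \<theta> x j)) = 0"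
    using vanish by (simp add: mpoly_eval_0)
  note conclusion = eff[unfolded poly_efficient_def, THEN conjunct2, THEN conjunct2, THEN conjunct2,
      THEN spec, THEN spec, THEN mp, OF this]
  then have "a = 0" using zero_in_mono_idx[of 0] by blast
  have coeffs: "\<And>k \<alpha>. k < 3 \<Longrightarrow> \<alpha> \<in> mono_idx ([0, 1, 2] ! k) \<Longrightarrow> A j k \<alpha> = 0"
    using conclusion by simp
  have "A j 0 (\<lambda>_. 0) = 0" "A j 1 (\<lambda>_. 0) = 0" "A j 1 (unit_multi_index i) = 0"
    "A j 2 (\<lambda>_. 0) = 0" "A j 2 (unit_multi_index i) = 0" "A j 2 (pair_multi_index i k) = 0"
    by (auto intro!: coeffs zero_in_mono_idx unit_in_mono_idx pair_in_mono_idx simp: numeral_2_eq_2)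
  moreover have "i \<le> k \<Longrightarrow> q j (i, k) = 0"
    using \<open>A j 2 (pair_multi_index i k) = 0\<close> by (simp add: A_def quadratic_coeffs_pair)
  ultimately show ?thesis
    using \<open>a = 0\<close> by (simp add: A_def linear_coeffs_zero linear_coeffs_unit quadratic_coeffs_zero
        quadratic_coeffs_unit)
qed

text \<open>The entry of \<open>(g1, g2)\<close> indexed by \<open>a\<close> is a constant plus
  \<open>\<integral>gfun \<psi> \<theta> a x * f_m(x) dP_X(x)\<close>, see \<open>gvec_eq\<close> below.\<close>

definition gfun :: "(real \<Rightarrow> real) \<Rightarrow> ('i::{finite,linorder}, 'j::finite) param \<Rightarrow>
    (('i::{finite,linorder}, 'j::finite) param, 'i::{finite,linorder}, 'j::finite) gidx \<Rightarrow>
    real ^ 'i::{finite,linorder} \<Rightarrow> real" where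
  "gfun \<psi> \<theta> a x = (case a of
       G1 e \<Rightarrow> -2 * resp_deriv \<psi> \<theta> x e
     | Gbb j \<Rightarrow> pv \<theta> $ j * deriv (deriv \<psi>) (preact \<theta> x j)
     | Gbw j i \<Rightarrow> pv \<theta> $ j * x $ i * deriv (deriv \<psi>) (preact \<theta> x j)
     | Gww j i k \<Rightarrow> pv \<theta> $ j * (x $ i * x $ k) * deriv (deriv \<psi>) (preact \<theta> x j))"

lemma finite_gindex: "finite (gindex :: (('i::{finite,linorder}, 'j::finite) param, 'i, 'j) gidx set)"
proof (rule finite_subset)
  show "gindex \<subseteq> G1 ` Basis \<union> range Gbb \<union> range (case_prod Gbw) \<union> range (\<lambda>(j, i, k). Gww j i k)"
    unfolding gindex_def by (auto intro: range_eqI[where x = "(_, _)"] range_eqI[where x = "(_, _, _)"])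
qed simp

lemma sum_gindex:
  fixes F :: "(('i::{finite,linorder}, 'j::finite) param, 'i, 'j) gidx \<Rightarrow> real"
  shows "sum F gindex = (\<Sum>e\<in>Basis. F (G1 e)) + (\<Sum>j\<in>UNIV. F (Gbb j)) +
     (\<Sum>j\<in>UNIV. \<Sum>i\<in>UNIV. F (Gbw j i)) + (\<Sum>j\<in>UNIV. \<Sum>p\<in>{p. fst p \<le> snd p}. F (Gww j (fst p) (snd p)))"
proof -
  define A3 where "A3 = ((\<lambda>(j, i). Gbw j i) ` UNIV :: (('i,'j) param, 'i, 'j) gidx set)"
  define A4 where "A4 = ((\<lambda>(j, p). Gww j (fst p) (snd p)) ` (UNIV \<times> {p::'i\<times>'i. fst p \<le> snd p})
     :: (('i,'j) param, 'i, 'j) gidx set)"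
  have "gindex = G1 ` Basis \<union> range Gbb \<union> A3 \<union> A4"
    unfolding gindex_def A3_def A4_def by (auto intro: image_eqI[where x = "(_, _, _)"])
  moreover have "sum F (G1 ` Basis \<union> range Gbb \<union> A3 \<union> A4)
      = sum F (G1 ` Basis \<union> range Gbb \<union> A3) + sum F A4"
    by (rule sum.union_disjoint) (auto simp: A3_def A4_def)
  moreover have "sum F (G1 ` Basis \<union> range Gbb \<union> A3) = sum F (G1 ` Basis \<union> range Gbb) + sum F A3"
    by (rule sum.union_disjoint) (auto simp: A3_def)
  moreover have "sum F (G1 ` Basis \<union> range Gbb) = sum F (G1 ` Basis) + sum F (range Gbb)"
    by (rule sum.union_disjoint) auto
  ultimately have "sum F gindex = sum F (G1 ` Basis) + sum F (range Gbb) + sum F A3 + sum F A4"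
    by simp
  moreover have "sum F A3 = (\<Sum>j\<in>UNIV. \<Sum>i\<in>UNIV. F (Gbw j i))"
    unfolding A3_def by (subst sum.reindex) (auto simp: inj_on_def sum.cartesian_product split_beta)
  moreover have "sum F A4 = (\<Sum>j\<in>UNIV. \<Sum>p\<in>{p. fst p \<le> snd p}. F (Gww j (fst p) (snd p)))"
    unfolding A4_def by (subst sum.reindex) (auto simp: inj_on_def sum.cartesian_product prod_eq_iff split_beta)
  ultimately show ?thesis by (simp add: sum.reindex inj_on_def)
qed

lemma gfun_independent:
  fixes \<theta> :: "('i::{finite,linorder}, 'j::finite) param"
  assumes eff: "poly_efficient \<psi> X 0 [0, 1, 2] \<theta>"
    and vanish: "\<forall>x\<in>X. (\<Sum>a\<in>gindex. c a * gfun \<psi> \<theta> a x) = 0"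
  shows "\<forall>a\<in>gindex. c a = 0"
proof -
  have "pv \<theta> $ j \<noteq> 0" for j using eff by (simp add: poly_efficient_def)
  define h where "h = (\<Sum>e\<in>Basis. c (G1 e) *\<^sub>R e)"
  define T1 where "T1 x j = (-2 * pv h $ j) * \<psi> (preact \<theta> x j)
      + (-2 * pv \<theta> $ j * pb h $ j + (\<Sum>i\<in>UNIV. -2 * pv \<theta> $ j * pW h $ i $ j * x $ i))
        * deriv \<psi> (preact \<theta> x j)" for x j
  define T2 where "T2 x j = (pv \<theta> $ j * c (Gbb j) + (\<Sum>i\<in>UNIV. pv \<theta> $ j * c (Gbw j i) * x $ i)
      + (\<Sum>p\<in>{p. fst p \<le> snd p}. pv \<theta> $ j * c (Gww j (fst p) (snd p)) * (x $ fst p * x $ snd p)))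
        * deriv (deriv \<psi>) (preact \<theta> x j)" for x j
  have "(\<Sum>a\<in>gindex. c a * gfun \<psi> \<theta> a x) = -2 * pc h + (\<Sum>j\<in>UNIV. T1 x j + T2 x j)" for x
  proof -
    have "resp_deriv \<psi> \<theta> x h = (\<Sum>e\<in>Basis. c (G1 e) * resp_deriv \<psi> \<theta> x e)"
      unfolding h_def by (simp add: linear_sum[OF linear_resp_deriv] linear_scale[OF linear_resp_deriv])
    then have "(\<Sum>e\<in>Basis. c (G1 e) * gfun \<psi> \<theta> (G1 e) x) = -2 * resp_deriv \<psi> \<theta> x h"
      by (simp add: gfun_def sum_distrib_left mult_ac)
    also have "\<dots> = -2 * pc h + (\<Sum>j\<in>UNIV. T1 x j)"
      unfolding resp_deriv_def distrib_left sum_distrib_left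
      by (simp add: T1_def preact_def algebra_simps sum_distrib_left sum_distrib_right)
    finally have "(\<Sum>e\<in>Basis. c (G1 e) * gfun \<psi> \<theta> (G1 e) x) = -2 * pc h + (\<Sum>j\<in>UNIV. T1 x j)" .
    moreover have "c (Gbb j) * gfun \<psi> \<theta> (Gbb j) x + (\<Sum>i\<in>UNIV. c (Gbw j i) * gfun \<psi> \<theta> (Gbw j i) x)
        + (\<Sum>p\<in>{p. fst p \<le> snd p}. c (Gww j (fst p) (snd p)) * gfun \<psi> \<theta> (Gww j (fst p) (snd p)) x)
        = T2 x j" for j
      by (simp add: T2_def gfun_def distrib_left distrib_right sum_distrib_left sum_distrib_right mult_ac)
    ultimately show ?thesis
      unfolding sum_gindex by (simp add: sum.distrib[symmetric] add.assoc)
  qed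
  then have "\<forall>x\<in>X. -2 * pc h + (\<Sum>j\<in>UNIV. T1 x j + T2 x j) = 0"
    using vanish by simp
  note coeffs_zero = poly_efficient_012_coeffs_zero[OF eff this[unfolded T1_def T2_def]]
  have zero: "pc h = 0 \<and> pv h $ j = 0 \<and> pb h $ j = 0 \<and> pW h $ i $ j = 0 \<and> c (Gbb j) = 0 \<and>
      c (Gbw j i) = 0 \<and> (i \<le> k \<longrightarrow> c (Gww j i k) = 0)" for i j k
    using coeffs_zero[of j i k] \<open>pv \<theta> $ j \<noteq> 0\<close> by simp
  then have "h = 0"
    by (simp add: prod_eq_iff vec_eq_iff pc_def pv_def pb_def pW_def)
  moreover have "h \<bullet> e = c (G1 e)" if "e \<in> Basis" for e
    using that by (simp add: h_def inner_sum_left inner_Basis if_distrib cong: if_cong)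
  ultimately show ?thesis
    using zero by (auto simp: gindex_def)
qed

section \<open>The entries of \<open>(g1, g2)\<close> as Gaussian functionals\<close>

lemma continuous_on_gfun:
  fixes \<theta> :: "('i::{finite,linorder}, 'j::finite) param"
  assumes "continuous_on UNIV \<psi>" "continuous_on UNIV (deriv \<psi>)" "continuous_on UNIV (deriv (deriv \<psi>))"
  shows "continuous_on UNIV (gfun \<psi> \<theta> a)"
proof -
  have "continuous_on UNIV (\<lambda>x::real ^ 'i::{finite,linorder}. (\<theta>, x))" by (intro continuous_intros)
  from continuous_on_compose2[OF continuous_on_resp_deriv[OF assms(1,2)] this]
  have "continuous_on UNIV (\<lambda>x. resp_deriv \<psi> \<theta> x e)" for e by simp
  moreover have "continuous_on UNIV (\<lambda>x. deriv (deriv \<psi>) (preact \<theta> x j))" for j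
    by (intro continuous_on_UNIV_compose[OF assms(3)] continuous_on_preact)
  ultimately show ?thesis
    unfolding gfun_def[abs_def] by (cases a) (auto intro!: continuous_intros)
qed

definition gvec_offset :: "(real \<Rightarrow> real) \<Rightarrow> (real ^ 'i::{finite,linorder}) measure \<Rightarrow>
    (('i::{finite,linorder}, 'j::finite) param \<Rightarrow> real) \<Rightarrow> ('i::{finite,linorder}, 'j::finite) param \<Rightarrow>
    (('i::{finite,linorder}, 'j::finite) param, 'i::{finite,linorder}, 'j::finite) gidx \<Rightarrow> real" where
  "gvec_offset \<psi> PX R \<theta> a = (case a of
       G1 e \<Rightarrow> gradient (\<lambda>\<theta>. (\<integral>x. (resp \<psi> \<theta> x)\<^sup>2 \<partial>PX) + R \<theta>) \<theta> \<bullet> e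
     | _ \<Rightarrow> 0)"

lemma gvec_eq:
  fixes PX :: "(real ^ 'i::{finite,linorder}) measure" and \<theta> :: "('i, 'j::finite) param"
  assumes "network_kernel PX MM K m \<psi>" "R differentiable (at \<theta>)"
  shows "gvec \<psi> PX K R m \<theta> a = gvec_offset \<psi> PX R \<theta> a + (\<integral>x. gfun \<psi> \<theta> a x * target K m x \<partial>PX)"
proof -
  interpret network_kernel PX MM K m \<psi> by fact
  show ?thesis
  proof (cases a)
    case (G1 e)
    then show ?thesis
      by (simp add: gvec_def gvec_offset_def gfun_def gradient_Jcost[OF assms(2)] mult.assoc)
  next
    case (Gbb j)
    then show ?thesis
      by (simp add: gvec_def gvec_offset_def gfun_def preact_dir_b mult_ac
          pdiff_pdiff_Jhat[OF hidden_unit_direction_dir_b hidden_unit_direction_dir_b])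
  next
    case (Gbw j i)
    then show ?thesis
      by (simp add: gvec_def gvec_offset_def gfun_def preact_dir_b preact_dir_w mult_ac
          pdiff_pdiff_Jhat[OF hidden_unit_direction_dir_w hidden_unit_direction_dir_b])
  next
    case (Gww j i k)
    then show ?thesis
      by (simp add: gvec_def gvec_offset_def gfun_def preact_dir_w mult_ac
          pdiff_pdiff_Jhat[OF hidden_unit_direction_dir_w hidden_unit_direction_dir_w])
  qed
qed

locale standard_setting =
  fixes \<psi> :: "real \<Rightarrow> real" and PX :: "(real ^ 'i::finite) measure" and MM :: "'m measure"
    and K :: "'m \<times> (real ^ 'i) \<Rightarrow> real measure" and R :: "('i, 'j::finite) param \<Rightarrow> real"
    and P :: "'w measure" and M :: "'w \<Rightarrow> 'm"
  assumes psi_analytic: "real_analytic_on \<psi> UNIV"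
    and PX_prob: "prob_space PX" and PX_borel: "sets PX = sets borel"
    and X_compact: "compact (msupport PX)"
    and K_kernel: "K \<in> measurable (MM \<Otimes>\<^sub>M borel) (prob_algebra borel)"
    and Y_sq: "\<forall>m\<in>space MM. (\<integral>\<^sup>+x. (\<integral>\<^sup>+y. ennreal (y\<^sup>2) \<partial>K (m, x)) \<partial>PX) < \<infinity>"
    and R_analytic: "real_analytic_on R UNIV"
    and P_prob: "prob_space P"
    and M_rv: "M \<in> measurable P MM"
    and M_gauss: "\<forall>\<phi>. continuous_on UNIV \<phi> \<longrightarrow> (\<exists>x\<in>msupport PX. \<phi> x \<noteq> 0) \<longrightarrow>
        (\<exists>\<mu> \<sigma>. \<sigma> > 0 \<and>
           distributed P lborel (\<lambda>\<omega>. \<integral>x. \<phi> x * target K (M \<omega>) x \<partial>PX) (normal_density \<mu> \<sigma>))"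
begin

lemma psi_has_higher_deriv: "((deriv ^^ k) \<psi> has_real_derivative (deriv ^^ Suc k) \<psi> t) (at t)"
  using real_analytic_on_has_higher_deriv[OF psi_analytic] by simp

lemma psi_higher_deriv_cont: "continuous_on UNIV ((deriv ^^ k) \<psi>)"
  using psi_has_higher_deriv by (meson DERIV_isCont continuous_at_imp_continuous_on)

lemma network_kernel: "\<omega> \<in> space P \<Longrightarrow> network_kernel PX MM K (M \<omega>) \<psi>"
  using psi_has_higher_deriv[of 0] psi_has_higher_deriv[of 1] psi_higher_deriv_cont[of 2]
    measurable_space[OF M_rv] PX_prob PX_borel K_kernel Y_sq X_compact
  by (simp add: network_kernel_def network_kernel_axioms_def square_integrable_kernel_def numeral_2_eq_2)

lemma integrable_integral_target:
  assumes "\<omega> \<in> space P" "continuous_on UNIV \<phi>"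
  shows "integrable PX (\<lambda>x. \<phi> x * target K (M \<omega>) x)"
proof -
  interpret network_kernel PX MM K "M \<omega>" \<psi> by (rule network_kernel[OF assms(1)])
  show ?thesis
    by (rule integrable_continuous_mult_compact_support[OF assms(2) support_compact AE_support
          integrable_target PX_borel])
qed

lemma square_integrable_integral_target:
  assumes "continuous_on UNIV \<phi>"
  shows "square_integrable P (\<lambda>\<omega>. \<integral>x. \<phi> x * target K (M \<omega>) x \<partial>PX)"
proof (cases "\<exists>x\<in>msupport PX. \<phi> x \<noteq> 0")
  case True
  then show ?thesis
    using M_gauss assms prob_space.normal_distributed_square_integrable[OF P_prob] by blast
next
  case False
  have "AE x in PX. \<phi> x * target K (M \<omega>) x = 0" for \<omega>
    using AE_in_msupport[OF PX_borel]
  proof eventually_elim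
    case (elim x)
    then show ?case using False by simp
  qed
  then have "(\<integral>x. \<phi> x * target K (M \<omega>) x \<partial>PX) = 0" for \<omega>
    by (rule integral_eq_zero_AE)
  then show ?thesis
    using finite_measure.square_integrable_const[OF prob_space.finite_measure[OF P_prob], of 0] by simp
qed

lemma integral_target_sum:
  assumes "\<omega> \<in> space P" "\<And>a. a \<in> I \<Longrightarrow> continuous_on UNIV (\<phi> a)"
  shows "(\<integral>x. (\<Sum>a\<in>I. c a * \<phi> a x) * target K (M \<omega>) x \<partial>PX)
    = (\<Sum>a\<in>I. c a * (\<integral>x. \<phi> a x * target K (M \<omega>) x \<partial>PX))"
  using integrable_integral_target[OF assms(1) assms(2)]
  by (simp add: sum_distrib_right mult.assoc)

lemma cov_matrix_null_vector_vanishes_on_support: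
  assumes "finite I" and cont: "\<And>a. a \<in> I \<Longrightarrow> continuous_on UNIV (\<phi> a)"
    and Z: "\<And>\<omega> a. \<omega> \<in> space P \<Longrightarrow> a \<in> I \<Longrightarrow> Z \<omega> a = A a + (\<integral>x. \<phi> a x * target K (M \<omega>) x \<partial>PX)"
    and null: "\<And>a. a \<in> I \<Longrightarrow> (\<Sum>b\<in>I. cov_matrix P Z a b * c b) = 0"
  shows "\<forall>x\<in>msupport PX. (\<Sum>a\<in>I. c a * \<phi> a x) = 0"
proof (rule ccontr)
  interpret P: prob_space P by (rule P_prob)
  define \<Phi> where "\<Phi> x = (\<Sum>a\<in>I. c a * \<phi> a x)" for x
  assume "\<not> (\<forall>x\<in>msupport PX. (\<Sum>a\<in>I. c a * \<phi> a x) = 0)"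
  moreover have "continuous_on UNIV \<Phi>" unfolding \<Phi>_def using cont by (intro continuous_intros) auto
  ultimately obtain \<mu> \<sigma> where "\<sigma> > 0"
    and gauss: "distributed P lborel (\<lambda>\<omega>. \<integral>x. \<Phi> x * target K (M \<omega>) x \<partial>PX) (normal_density \<mu> \<sigma>)"
    using M_gauss by (auto simp: \<Phi>_def)
  have "square_integrable P (\<lambda>\<omega>. Z \<omega> a)" if "a \<in> I" for a
    using Z[OF _ that] square_integrable_integral_target[OF cont[OF that]]
    by (subst square_integrable_cong[where Y = "\<lambda>\<omega>. A a + (\<integral>x. \<phi> a x * target K (M \<omega>) x \<partial>PX)"])
      (auto intro: square_integrable_add P.square_integrable_const)
  then have "AE \<omega> in P. (\<Sum>a\<in>I. c a * Z \<omega> a) = (\<Sum>a\<in>I. c a * P.expectation (\<lambda>\<omega>. Z \<omega> a))"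
    by (intro P.cov_matrix_null_vector_AE_const[OF \<open>finite I\<close> _ null])
  with AE_space have "AE \<omega> in P. (\<integral>x. \<Phi> x * target K (M \<omega>) x \<partial>PX)
      = (\<Sum>a\<in>I. c a * P.expectation (\<lambda>\<omega>. Z \<omega> a)) - (\<Sum>a\<in>I. c a * A a)"
    by eventually_elim (simp add: \<Phi>_def Z integral_target_sum cont distrib_left sum.distrib)
  then show False
    using P.normal_distributed_not_AE_const[OF \<open>\<sigma> > 0\<close> gauss] by blast
qed

end

theorem proposition2p5:
  fixes \<psi> :: "real \<Rightarrow> real"
    and PX :: "(real ^ 'i::{finite,linorder}) measure"
    and MM :: "'m measure"
    and K :: "'m \<times> (real ^ 'i::{finite,linorder}) \<Rightarrow> real measure"
    and R :: "('i::{finite,linorder}, 'j::finite) param \<Rightarrow> real"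
    and P :: "'w measure"
    and M :: "'w \<Rightarrow> 'm"
    and \<theta> :: "('i::{finite,linorder}, 'j::finite) param"
  assumes psi_analytic: "real_analytic_on \<psi> UNIV"
    and PX_prob: "prob_space PX" and PX_borel: "sets PX = sets borel"
    and X_compact: "compact (msupport PX)"
    and K_kernel: "K \<in> measurable (MM \<Otimes>\<^sub>M borel) (prob_algebra borel)"
    and Y_sq: "\<forall>m\<in>space MM. (\<integral>\<^sup>+x. (\<integral>\<^sup>+y. ennreal (y\<^sup>2) \<partial>K (m, x)) \<partial>PX) < \<infinity>"
    and R_analytic: "real_analytic_on R UNIV" and R_convex: "convex_on UNIV R"
    and P_prob: "prob_space P"
    and M_rv: "M \<in> measurable P MM"
    and M_gauss: "\<forall>\<phi>. continuous_on UNIV \<phi> \<longrightarrow> (\<exists>x\<in>msupport PX. \<phi> x \<noteq> 0) \<longrightarrow>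
        (\<exists>\<mu> \<sigma>. \<sigma> > 0 \<and>
           distributed P lborel (\<lambda>\<omega>. \<integral>x. \<phi> x * target K (M \<omega>) x \<partial>PX) (normal_density \<mu> \<sigma>))"
    and eff: "poly_efficient \<psi> (msupport PX) 0 [0, 1, 2] \<theta>"
  shows "full_rank_on gindex
           (cov_matrix P (\<lambda>\<omega>. gvec \<psi> PX K R (M \<omega>) \<theta>))"
proof -
  interpret standard_setting \<psi> PX MM K R P M
    by (rule standard_setting.intro) fact+
  have "R differentiable (at \<theta>)"
    using real_analytic_on_differentiable[OF R_analytic] by simp
  note gvec = gvec_eq[OF network_kernel this]
  have cont: "continuous_on UNIV (gfun \<psi> \<theta> a)" for a
    using psi_higher_deriv_cont[of 0] psi_higher_deriv_cont[of 1] psi_higher_deriv_cont[of 2]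
    by (intro continuous_on_gfun) (simp_all add: numeral_2_eq_2)
  show ?thesis
    unfolding full_rank_on_def
  proof (intro allI impI)
    fix c
    assume "\<forall>a\<in>gindex. (\<Sum>b\<in>gindex. cov_matrix P (\<lambda>\<omega>. gvec \<psi> PX K R (M \<omega>) \<theta>) a b * c b) = 0"
    then have "\<forall>x\<in>msupport PX. (\<Sum>a\<in>gindex. c a * gfun \<psi> \<theta> a x) = 0"
      by (intro cov_matrix_null_vector_vanishes_on_support[OF finite_gindex cont gvec]) auto
    then show "\<forall>a\<in>gindex. c a = 0"
      by (rule gfun_independent[OF eff])
  qed
qed

end
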